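(* Let $\mathcal{L}$ be a finite set of localities and let $\mathcal{G}$ be a connected, undirected (symmetric) simple graph on $\mathcal{L}$ with $0/1$ adjacency matrix $G$; let $\lambda_r$ be the spectral radius of $G$. Let $\beta,\beta^{\textsc{int}}:\mathbb{Z}_{\ge 0}\to(0,\infty)$ be bounded functions such that the limits $\beta_\infty=\lim_{n\to\infty}\beta(n)$ and $\beta^{\textsc{int}}_\infty=\lim_{n\to\infty}\beta^{\textsc{int}}(n)$ exist, and let $\delta>0$. Consider the continuous-time Markov chain $\mathbf{X}(t)=(X_u(t))_{u\in\mathcal{L}}$ on $\mathbb{Z}_{\ge0}^{\mathcal{L}}$ in which, writing $X(t)=\sum_{u}X_u(t)$, for each $u\in\mathcal{L}$: $X_u\to X_u+1$ at rate $\sum_{v:(u,v)\in\mathcal{G}}\beta(X(t))X_v(t)+\beta^{\textsc{int}}(X(t))X_u(t)$, and $X_u\to X_u-1$ at rate $\delta X_u(t)$. For a state $\mathbf{X}$, let $T_{\mathbf{X}}$ be the first time the chain started at $\mathbf{X}$ reaches the all-zero state $\mathbf{0}$. Then: (i) If $\beta_\infty\lambda_r+\beta^{\textsc{int}}_\infty<\delta$, there exists a constant $C>0$ such that $\mathbb{E}[T_{\mathbf{X}}]\le C\ln n$ for every state $\mathbf{X}$ with $\mathbf{1}^\top\mathbf{X}=n\ge 2$. (ii) If $\beta_\infty\lambda_r+\beta^{\textsc{int}}_\infty>\delta$, then $\mathbb{E}[T_{\mathbf{X}}]=\infty$ for every state $\mathbf{X}\neq\mathbf{0}$.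
   Context: $X_u(t)$ is the number of infected people at locality $u$ at time $t$; the number of infections at each locality may be any nonnegative integer. $\mathbf{1}$ denotes the all-ones vector, so $\mathbf{1}^\top\mathbf{X}$ is the total number of infections. The all-zero state is absorbing. *)

theory Defs
  imports "HOL-Analysis.Analysis" "Jordan_Normal_Form.Spectral_Radius"
begin

text \<open>Localities are 0,...,m-1. A state is a function nat => nat which is zero outside
  the localities. The graph is a relation E (only its restriction to the localities matters).\<close>

definition loc_state :: "nat \<Rightarrow> (nat \<Rightarrow> nat) \<Rightarrow> bool" where
  "loc_state m x \<longleftrightarrow> (\<forall>u\<ge>m. x u = 0)"

definition total_inf :: "nat \<Rightarrow> (nat \<Rightarrow> nat) \<Rightarrow> nat" where
  "total_inf m x = (\<Sum>u<m. x u)"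

definition simple_graph_on :: "nat \<Rightarrow> (nat \<Rightarrow> nat \<Rightarrow> bool) \<Rightarrow> bool" where
  "simple_graph_on m E \<longleftrightarrow> (\<forall>u<m. \<forall>v<m. E u v \<longleftrightarrow> E v u) \<and> (\<forall>u<m. \<not> E u u)"

definition connected_on :: "nat \<Rightarrow> (nat \<Rightarrow> nat \<Rightarrow> bool) \<Rightarrow> bool" where
  "connected_on m E \<longleftrightarrow>
     (\<forall>u<m. \<forall>v<m. (\<lambda>a b. E a b \<and> a < m \<and> b < m)\<^sup>*\<^sup>* u v)"

text \<open>0/1 adjacency matrix (complex entries, for the library spectral radius).\<close>
definition adj_mat :: "nat \<Rightarrow> (nat \<Rightarrow> nat \<Rightarrow> bool) \<Rightarrow> complex mat" where
  "adj_mat m E = mat m m (\<lambda>(i, j). if E i j then 1 else 0)"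

definition up_rate :: "nat \<Rightarrow> (nat \<Rightarrow> nat \<Rightarrow> bool) \<Rightarrow> (nat \<Rightarrow> real) \<Rightarrow> (nat \<Rightarrow> real)
    \<Rightarrow> (nat \<Rightarrow> nat) \<Rightarrow> nat \<Rightarrow> real" where
  "up_rate m E \<beta> \<beta>int x u =
     (\<Sum>v<m. if E u v then \<beta> (total_inf m x) * real (x v) else 0)
     + \<beta>int (total_inf m x) * real (x u)"

definition down_rate :: "real \<Rightarrow> (nat \<Rightarrow> nat) \<Rightarrow> nat \<Rightarrow> real" where
  "down_rate \<delta> x u = \<delta> * real (x u)"

definition total_rate :: "nat \<Rightarrow> (nat \<Rightarrow> nat \<Rightarrow> bool) \<Rightarrow> (nat \<Rightarrow> real) \<Rightarrow> (nat \<Rightarrow> real)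
    \<Rightarrow> real \<Rightarrow> (nat \<Rightarrow> nat) \<Rightarrow> real" where
  "total_rate m E \<beta> \<beta>int \<delta> x = (\<Sum>u<m. up_rate m E \<beta> \<beta>int x u + down_rate \<delta> x u)"

definition jump_prob :: "nat \<Rightarrow> (nat \<Rightarrow> nat \<Rightarrow> bool) \<Rightarrow> (nat \<Rightarrow> real) \<Rightarrow> (nat \<Rightarrow> real)
    \<Rightarrow> real \<Rightarrow> (nat \<Rightarrow> nat) \<Rightarrow> (nat \<Rightarrow> nat) \<Rightarrow> ennreal" where
  "jump_prob m E \<beta> \<beta>int \<delta> x y =
     (if x = (\<lambda>_. 0) then (if y = x then 1 else 0)
      else (\<Sum>u<m.
        (if y = x(u := x u + 1)
         then ennreal (up_rate m E \<beta> \<beta>int x u / total_rate m E \<beta> \<beta>int \<delta> x) else 0)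
        + (if 0 < x u \<and> y = x(u := x u - 1)
         then ennreal (down_rate \<delta> x u / total_rate m E \<beta> \<beta>int \<delta> x) else 0)))"

fun jump_dist :: "nat \<Rightarrow> (nat \<Rightarrow> nat \<Rightarrow> bool) \<Rightarrow> (nat \<Rightarrow> real) \<Rightarrow> (nat \<Rightarrow> real)
    \<Rightarrow> real \<Rightarrow> (nat \<Rightarrow> nat) \<Rightarrow> nat \<Rightarrow> (nat \<Rightarrow> nat) \<Rightarrow> ennreal" where
  "jump_dist m E \<beta> \<beta>int \<delta> X 0 y = (if y = X then 1 else 0)"
| "jump_dist m E \<beta> \<beta>int \<delta> X (Suc n) y =
     (\<integral>\<^sup>+ x. jump_dist m E \<beta> \<beta>int \<delta> X n x * jump_prob m E \<beta> \<beta>int \<delta> x y \<partial>count_space UNIV)"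

definition mean_hold :: "nat \<Rightarrow> (nat \<Rightarrow> nat \<Rightarrow> bool) \<Rightarrow> (nat \<Rightarrow> real) \<Rightarrow> (nat \<Rightarrow> real)
    \<Rightarrow> real \<Rightarrow> (nat \<Rightarrow> nat) \<Rightarrow> ennreal" where
  "mean_hold m E \<beta> \<beta>int \<delta> x =
     (if x = (\<lambda>_. 0) then 0 else ennreal (1 / total_rate m E \<beta> \<beta>int \<delta> x))"

text \<open>Expected hitting time of the zero state: E[T_X] = sum over jumps n of the expected
  holding time in the n-th visited state (Tonelli applied to T = sum of holding times).\<close>
definition expected_hitting_time :: "nat \<Rightarrow> (nat \<Rightarrow> nat \<Rightarrow> bool) \<Rightarrow> (nat \<Rightarrow> real) \<Rightarrow> (nat \<Rightarrow> real)
    \<Rightarrow> real \<Rightarrow> (nat \<Rightarrow> nat) \<Rightarrow> ennreal" where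
  "expected_hitting_time m E \<beta> \<beta>int \<delta> X =
     (\<Sum>n. \<integral>\<^sup>+ x. jump_dist m E \<beta> \<beta>int \<delta> X n x * mean_hold m E \<beta> \<beta>int \<delta> x \<partial>count_space UNIV)"

end

theory Submission
  imports Defs
begin

text \<open>
  Subcritical case: for \<open>\<rho>\<close> slightly above the spectral radius \<open>\<lambda>\<^sub>r\<close> there is a positive
  supereigenvector \<open>G v \<le> \<rho> v\<close>. Once the total number of infections is large, the weighted total
  \<open>w = \<Sum>\<^sub>u v\<^sub>u X\<^sub>u\<close> has drift at most \<open>-\<epsilon> w\<close>, so \<open>(2/\<epsilon>) ln (1 + w)\<close>, corrected by a bounded term
  for small totals, decreases at rate at least 1. Summing the holding times along the embedded jump
  chain then gives \<open>E T\<^sub>X \<le> V X = O(ln n)\<close>.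

  Supercritical case: for a positive Perron subeigenvector \<open>\<lambda>\<^sub>r v \<le> G v\<close> and small \<open>a > 0\<close>, the
  function \<open>1 - C exp (-a w)\<close> is subharmonic for the jump chain, so its expectation stays bounded
  away from \<open>0\<close>, while the mean holding time after \<open>k\<close> jumps is of order \<open>1/k\<close>. Hence \<open>E T\<^sub>X\<close>
  dominates a harmonic series.
\<close>

definition adj_op :: "nat \<Rightarrow> (nat \<Rightarrow> nat \<Rightarrow> bool) \<Rightarrow> (nat \<Rightarrow> real) \<Rightarrow> nat \<Rightarrow> real" where
  "adj_op m E z i = (\<Sum>j<m. if E i j then z j else 0)"

lemma adj_op_nonneg: "(\<And>j. j < m \<Longrightarrow> 0 \<le> z j) \<Longrightarrow> 0 \<le> adj_op m E z i"
  unfolding adj_op_def by (auto intro!: sum_nonneg)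

lemma adj_op_mono: "(\<And>j. j < m \<Longrightarrow> z j \<le> z' j) \<Longrightarrow> adj_op m E z i \<le> adj_op m E z' i"
  unfolding adj_op_def by (auto intro!: sum_mono)

lemma adj_op_add: "adj_op m E (\<lambda>j. z j + z' j) i = adj_op m E z i + adj_op m E z' i"
  unfolding adj_op_def sum.distrib[symmetric] by (rule sum.cong) auto

lemma adj_op_cmult: "adj_op m E (\<lambda>j. c * z j) i = c * adj_op m E z i"
  unfolding adj_op_def sum_distrib_left by (rule sum.cong) auto

lemma adj_op_sum: "adj_op m E (\<lambda>j. \<Sum>k\<in>K. f k j) i = (\<Sum>k\<in>K. adj_op m E (f k) i)"
  unfolding adj_op_def by (subst sum.swap[symmetric]) (auto intro!: sum.cong)

lemma adj_op_funpow_nonneg: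
  "(\<And>j. j < m \<Longrightarrow> 0 \<le> z j) \<Longrightarrow> i < m \<Longrightarrow> 0 \<le> (adj_op m E ^^ k) z i"
  by (induction k arbitrary: i) (auto intro: adj_op_nonneg)

lemma adj_op_symmetric:
  assumes "simple_graph_on m E"
  shows "(\<Sum>i<m. z i * adj_op m E y i) = (\<Sum>j<m. y j * adj_op m E z j)"
proof -
  have "(\<Sum>i<m. z i * adj_op m E y i) = (\<Sum>i<m. \<Sum>j<m. if E i j then z i * y j else 0)"
    unfolding adj_op_def sum_distrib_left by (intro sum.cong) auto
  also have "\<dots> = (\<Sum>j<m. \<Sum>i<m. if E j i then y j * z i else 0)"
    using assms unfolding simple_graph_on_def by (subst sum.swap) (auto intro!: sum.cong)
  also have "\<dots> = (\<Sum>j<m. y j * adj_op m E z j)"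
    unfolding adj_op_def sum_distrib_left by (intro sum.cong) auto
  finally show ?thesis .
qed

lemma adj_mat_carrier: "adj_mat m E \<in> carrier_mat m m"
  by (simp add: adj_mat_def)

lemma adj_mat_mult_vec:
  assumes "i < m" "x \<in> carrier_vec m"
  shows "(adj_mat m E *\<^sub>v x) $ i = (\<Sum>j<m. if E i j then x $ j else 0)"
  using assms by (auto simp: adj_mat_def scalar_prod_def row_def atLeast0LessThan intro!: sum.cong)

lemma adj_mat_pow_mult_vec:
  assumes "i < m"
  shows "(adj_mat m E ^\<^sub>m k *\<^sub>v vec m (\<lambda>j. of_real (z j))) $ i = of_real ((adj_op m E ^^ k) z i)"
  using assms
proof (induction k arbitrary: z)
  case 0
  then show ?case by (simp add: adj_mat_def)
next
  case (Suc k)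
  have "adj_mat m E *\<^sub>v vec m (\<lambda>j. of_real (z j)) = vec m (\<lambda>j. of_real (adj_op m E z j))"
  proof (rule eq_vecI)
    show "dim_vec (adj_mat m E *\<^sub>v vec m (\<lambda>j. of_real (z j))) = dim_vec (vec m (\<lambda>j. of_real (adj_op m E z j)))"
      by (simp add: adj_mat_def)
  qed (auto simp: adj_mat_mult_vec adj_op_def intro!: sum.cong)
  then have "adj_mat m E ^\<^sub>m Suc k *\<^sub>v vec m (\<lambda>j. of_real (z j))
      = adj_mat m E ^\<^sub>m k *\<^sub>v vec m (\<lambda>j. of_real (adj_op m E z j))"
    using adj_mat_carrier[of m E] by (simp add: assoc_mult_mat_vec[of _ m m _ m])
  then show ?case
    using Suc by (simp only: funpow_Suc_right o_apply)
qed

lemma spectral_radius_adj_mat_nonneg: "0 < m \<Longrightarrow> 0 \<le> spectral_radius (adj_mat m E)"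
  using spectral_radius_mem_max(1)[OF adj_mat_carrier[of m E]] by auto

section \<open>Sub- and supereigenvectors\<close>

lemma adj_op_ge_entry:
  assumes "\<And>j. j < m \<Longrightarrow> 0 \<le> z j" "a < m" "E b a"
  shows "z a \<le> adj_op m E z b"
  unfolding adj_op_def
  using assms member_le_sum[of a "{..<m}" "\<lambda>j. if E b j then z j else 0"] by auto

definition adj_subeigvec :: "nat \<Rightarrow> (nat \<Rightarrow> nat \<Rightarrow> bool) \<Rightarrow> real \<Rightarrow> (nat \<Rightarrow> real) \<Rightarrow> bool" where
  "adj_subeigvec m E l z \<longleftrightarrow>
     (\<forall>i<m. 0 \<le> z i) \<and> (\<exists>i<m. 0 < z i) \<and> (\<forall>i<m. l * z i \<le> adj_op m E z i)"

lemma adj_subeigvec_exists: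
  assumes "0 < m"
  shows "\<exists>z. adj_subeigvec m E (spectral_radius (adj_mat m E)) z"
proof -
  let ?A = "adj_mat m E"
  obtain ev where "ev \<in> spectrum ?A" and norm_ev: "norm ev = spectral_radius ?A"
    using spectral_radius_mem_max(1)[OF adj_mat_carrier[of m E] assms] by auto
  then obtain x where "eigenvector ?A x ev"
    unfolding spectrum_def eigenvalue_def by auto
  then have x: "x \<in> carrier_vec m" "x \<noteq> 0\<^sub>v m" and eigen: "?A *\<^sub>v x = ev \<cdot>\<^sub>v x"
    unfolding eigenvector_def by (auto simp: adj_mat_def)
  define z where "z i = norm (x $ i)" for i
  obtain i0 where "i0 < m" "x $ i0 \<noteq> 0"
    using x by (metis eq_vecI carrier_vecD index_zero_vec)
  then have "\<exists>i<m. 0 < z i"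
    unfolding z_def by auto
  moreover have "spectral_radius ?A * z i \<le> adj_op m E z i" if "i < m" for i
  proof -
    have "spectral_radius ?A * z i = norm ((?A *\<^sub>v x) $ i)"
      using that x by (simp add: eigen z_def norm_ev norm_mult)
    also have "\<dots> = norm (\<Sum>j<m. if E i j then x $ j else 0)"
      using adj_mat_mult_vec[OF that x(1)] by simp
    also have "\<dots> \<le> (\<Sum>j<m. norm (if E i j then x $ j else 0))"
      by (rule norm_sum)
    also have "\<dots> = adj_op m E z i"
      unfolding adj_op_def z_def by (auto intro!: sum.cong)
    finally show ?thesis .
  qed
  ultimately show ?thesis
    unfolding adj_subeigvec_def by (intro exI[of _ z]) (auto simp: z_def)
qed

lemma adj_subeigvec_smooth:
  assumes "adj_subeigvec m E l z"
  shows "adj_subeigvec m E l (\<lambda>i. z i + adj_op m E z i)"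
proof -
  have z_nonneg: "\<And>i. i < m \<Longrightarrow> 0 \<le> z i" and z_sub: "\<And>i. i < m \<Longrightarrow> l * z i \<le> adj_op m E z i"
    using assms unfolding adj_subeigvec_def by auto
  have "l * adj_op m E z i \<le> adj_op m E (adj_op m E z) i" for i
    using adj_op_mono[of m "\<lambda>j. l * z j" "adj_op m E z" E i] z_sub by (simp add: adj_op_cmult)
  moreover obtain i where "i < m" "0 < z i"
    using assms unfolding adj_subeigvec_def by auto
  ultimately show ?thesis
    using z_nonneg z_sub adj_op_nonneg[of m z E] unfolding adj_subeigvec_def
    by (auto simp: adj_op_add distrib_left intro!: add_mono add_pos_nonneg exI[of _ i])
qed

lemma connected_on_closed:
  assumes "connected_on m E" "i < m" "i \<in> S" "\<And>a b. a \<in> S \<Longrightarrow> E a b \<Longrightarrow> b < m \<Longrightarrow> b \<in> S" "j < m"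
  shows "j \<in> S"
proof -
  have "(\<lambda>a b. E a b \<and> a < m \<and> b < m)\<^sup>*\<^sup>* i j"
    using assms unfolding connected_on_def by auto
  then show ?thesis
    by (induction rule: rtranclp_induct) (use assms in auto)
qed

text \<open>A nonnegative subeigenvector of maximal support is positive: smoothing it to \<open>z + G z\<close>
  keeps it a subeigenvector and spreads its support to all neighbours.\<close>

lemma adj_subeigvec_imp_pos:
  assumes graph: "simple_graph_on m E" and conn: "connected_on m E"
    and sub: "adj_subeigvec m E l y"
  shows "\<exists>v. (\<forall>i<m. 0 < v i) \<and> (\<forall>i<m. l * v i \<le> adj_op m E v i)"
proof -
  define supp where "supp z = {i. i < m \<and> 0 < z i}" for z :: "nat \<Rightarrow> real"
  have supp_le: "card (supp z) < Suc m" for z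
  proof -
    have "supp z \<subseteq> {..<m}"
      by (auto simp: supp_def)
    then show ?thesis
      using card_mono[of "{..<m}" "supp z"] by simp
  qed
  obtain z where z: "adj_subeigvec m E l z"
    and z_max: "\<And>z'. adj_subeigvec m E l z' \<Longrightarrow> card (supp z') \<le> card (supp z)"
    using ex_has_greatest_nat[of "adj_subeigvec m E l" y "\<lambda>z. card (supp z)" "Suc m"] sub supp_le
    by blast
  have z_nonneg: "\<And>i. i < m \<Longrightarrow> 0 \<le> z i"
    using z unfolding adj_subeigvec_def by auto
  define z' where "z' i = z i + adj_op m E z i" for i
  have "supp z \<subseteq> supp z'"
    unfolding supp_def z'_def using adj_op_nonneg[OF z_nonneg] by (auto intro: add_pos_nonneg)
  moreover have "card (supp z') \<le> card (supp z)"
    using z_max adj_subeigvec_smooth[OF z] unfolding z'_def by blast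
  ultimately have supp_eq: "supp z' = supp z"
    by (intro card_seteq[symmetric]) (auto simp: supp_def)
  have closed: "b \<in> supp z" if "a \<in> supp z" "E a b" "b < m" for a b
  proof -
    have "E b a"
      using graph that unfolding simple_graph_on_def supp_def by auto
    then have "z a \<le> adj_op m E z b"
      using that z_nonneg by (intro adj_op_ge_entry) (auto simp: supp_def)
    then have "0 < z' b"
      using that z_nonneg[of b] unfolding z'_def supp_def by auto
    then show ?thesis
      using supp_eq \<open>b < m\<close> unfolding supp_def by auto
  qed
  obtain i0 where "i0 \<in> supp z"
    using z unfolding adj_subeigvec_def supp_def by auto
  then have "j \<in> supp z" if "j < m" for j
    using connected_on_closed[OF conn _ _ closed that] by (auto simp: supp_def)
  then show ?thesis
    using z unfolding adj_subeigvec_def supp_def by auto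
qed

lemma smult_mat_mult_vec:
  assumes "A \<in> carrier_mat n n" "v \<in> carrier_vec n"
  shows "(c \<cdot>\<^sub>m A) *\<^sub>v v = c \<cdot>\<^sub>v (A *\<^sub>v v)"
  using assms
  by (intro eq_vecI) (auto simp: row_def scalar_prod_def sum_distrib_left mult.assoc intro!: sum.cong)

lemma pow_mat_smult:
  assumes A: "(A :: 'a :: comm_ring_1 mat) \<in> carrier_mat n n"
  shows "(c \<cdot>\<^sub>m A) ^\<^sub>m k = c ^ k \<cdot>\<^sub>m A ^\<^sub>m k"
proof (induction k)
  case 0
  then show ?case using A by (intro eq_matI) auto
next
  case (Suc k)
  have "(c \<cdot>\<^sub>m A) ^\<^sub>m Suc k = c ^ k \<cdot>\<^sub>m (A ^\<^sub>m k * (c \<cdot>\<^sub>m A))"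
    using Suc A by (simp add: mult_smult_assoc_mat[OF pow_carrier_mat[OF A] smult_carrier_mat[OF A]])
  also have "\<dots> = c ^ k \<cdot>\<^sub>m (c \<cdot>\<^sub>m A ^\<^sub>m Suc k)"
    using A by (simp add: mult_smult_distrib[OF pow_carrier_mat[OF A] A])
  also have "\<dots> = c ^ Suc k \<cdot>\<^sub>m A ^\<^sub>m Suc k"
    by (intro eq_matI) (simp_all add: mult.assoc)
  finally show ?case .
qed
lemma eigenvalue_smult_mat:
  fixes A :: "'a :: field mat"
  assumes A: "A \<in> carrier_mat n n" and c: "c \<noteq> 0" and ev: "eigenvalue (c \<cdot>\<^sub>m A) \<mu>"
  shows "eigenvalue A (\<mu> / c)"
proof -
  obtain v where v: "v \<in> carrier_vec n" "v \<noteq> 0\<^sub>v n" and "(c \<cdot>\<^sub>m A) *\<^sub>v v = \<mu> \<cdot>\<^sub>v v"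
    using ev A unfolding eigenvalue_def eigenvector_def by auto
  then have eq: "c \<cdot>\<^sub>v (A *\<^sub>v v) = \<mu> \<cdot>\<^sub>v v"
    using A by (simp add: smult_mat_mult_vec)
  have "A *\<^sub>v v = (1 / c) \<cdot>\<^sub>v (c \<cdot>\<^sub>v (A *\<^sub>v v))"
    using c by (simp add: smult_smult_assoc)
  also have "\<dots> = (\<mu> / c) \<cdot>\<^sub>v v"
    unfolding eq by (simp add: smult_smult_assoc)
  finally have "A *\<^sub>v v = (\<mu> / c) \<cdot>\<^sub>v v" .
  then show ?thesis
    using A v unfolding eigenvalue_def eigenvector_def by auto
qed

text \<open>Gelfand's formula in the weak form \<open>\<parallel>A\<^sup>k\<parallel> = O(r\<^sup>k)\<close> for every \<open>r\<close> above the
  spectral radius.\<close>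

lemma mat_pow_norm_bound_exp:
  fixes A :: "complex mat"
  assumes A: "A \<in> carrier_mat n n" and n: "0 < n" and r: "spectral_radius A < r"
  shows "\<exists>c. \<forall>k. norm_bound (A ^\<^sub>m k) (c * r ^ k)"
proof -
  have r_pos: "0 < r"
    using spectral_radius_mem_max(1)[OF A n] r by (auto intro: le_less_trans[OF norm_ge_zero])
  define B where "B = of_real (1 / r) \<cdot>\<^sub>m A"
  have B: "B \<in> carrier_mat n n"
    using A unfolding B_def by simp
  have "spectral_radius B < 1"
  proof -
    obtain \<mu> where "eigenvalue B \<mu>" and norm_\<mu>: "spectral_radius B = norm \<mu>"
      using spectral_radius_mem_max(1)[OF B n] unfolding spectrum_def by auto
    then have "eigenvalue A (\<mu> / of_real (1 / r))"
      using r_pos unfolding B_def by (intro eigenvalue_smult_mat[OF A]) auto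
    then have "norm (\<mu> / of_real (1 / r)) \<le> spectral_radius A"
      using spectral_radius_mem_max(2)[OF A n] unfolding spectrum_def by auto
    moreover have "norm (\<mu> / of_real (1 / r)) = norm \<mu> * r"
      using r_pos by (simp add: norm_mult)
    ultimately have "norm \<mu> * r < r"
      using r by linarith
    then show ?thesis
      using r_pos norm_\<mu> by simp
  qed
  then obtain c where c: "\<And>k. norm_bound (B ^\<^sub>m k) c"
    using spectral_radius_jnf_norm_bound_less_1_upper_triangular[OF B] by auto
  have "norm ((A ^\<^sub>m k) $$ (i, j)) \<le> c * r ^ k" if "i < n" "j < n" for i j k
  proof -
    have "A = of_real r \<cdot>\<^sub>m B"
      using A r_pos unfolding B_def by (intro eq_matI) auto
    then have "(A ^\<^sub>m k) $$ (i, j) = of_real r ^ k * (B ^\<^sub>m k) $$ (i, j)"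
      using that B by (simp add: pow_mat_smult[OF B])
    moreover have "norm ((B ^\<^sub>m k) $$ (i, j)) \<le> c"
      using c[of k] that B unfolding norm_bound_def by auto
    ultimately show ?thesis
      using r_pos by (simp add: norm_mult norm_power mult.commute mult_left_mono)
  qed
  then have "norm_bound (A ^\<^sub>m k) (c * r ^ k)" for k
    using pow_carrier_mat[OF A, of k] by (intro norm_boundI) (metis carrier_matD)
  then show ?thesis by blast
qed

lemma adj_op_funpow_growth:
  assumes m: "0 < m" and r: "spectral_radius (adj_mat m E) < r"
  shows "\<exists>c. \<forall>k i. i < m \<longrightarrow> (adj_op m E ^^ k) (\<lambda>_. 1) i \<le> c * r ^ k"
proof -
  let ?A = "adj_mat m E"
  obtain c where c: "\<And>k. norm_bound (?A ^\<^sub>m k) (c * r ^ k)"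
    using mat_pow_norm_bound_exp[OF adj_mat_carrier m r] by auto
  have "(adj_op m E ^^ k) (\<lambda>_. 1) i \<le> m * c * r ^ k" if i: "i < m" for k i
  proof -
    have "of_real ((adj_op m E ^^ k) (\<lambda>_. 1) i) = (?A ^\<^sub>m k *\<^sub>v vec m (\<lambda>_. of_real 1)) $ i"
      using adj_mat_pow_mult_vec[OF i, of E k "\<lambda>_. 1"] by simp
    also have "\<dots> = (\<Sum>j<m. (?A ^\<^sub>m k) $$ (i, j))"
      using i adj_mat_carrier[of m E] by (simp add: scalar_prod_def row_def atLeast0LessThan)
    finally have "(adj_op m E ^^ k) (\<lambda>_. 1) i \<le> norm (\<Sum>j<m. (?A ^\<^sub>m k) $$ (i, j))"
      by (metis norm_of_real abs_ge_self)
    also have "\<dots> \<le> (\<Sum>j<m. norm ((?A ^\<^sub>m k) $$ (i, j)))"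
      by (rule norm_sum)
    also have "\<dots> \<le> (\<Sum>j<m. c * r ^ k)"
      using c[of k] i adj_mat_carrier[of m E] unfolding norm_bound_def by (intro sum_mono) auto
    finally show ?thesis by simp
  qed
  then show ?thesis by blast
qed

lemma adj_op_funpow_le_pow:
  assumes m: "0 < m" and \<rho>: "spectral_radius (adj_mat m E) < \<rho>"
  shows "\<exists>n>0. \<forall>i<m. (adj_op m E ^^ n) (\<lambda>_. 1) i \<le> \<rho> ^ n"
proof -
  define r where "r = (spectral_radius (adj_mat m E) + \<rho>) / 2"
  have r: "spectral_radius (adj_mat m E) < r" "0 < r" "r < \<rho>"
    using \<rho> spectral_radius_adj_mat_nonneg[OF m, of E] unfolding r_def by auto
  obtain c where c: "\<And>k i. i < m \<Longrightarrow> (adj_op m E ^^ k) (\<lambda>_. 1) i \<le> c * r ^ k"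
    using adj_op_funpow_growth[OF m r(1)] by auto
  have "(\<lambda>n. c * (r / \<rho>) ^ n) \<longlonglongrightarrow> 0"
    using r by (intro tendsto_mult_right_zero LIMSEQ_power_zero) auto
  then have "eventually (\<lambda>n. c * (r / \<rho>) ^ n < 1) sequentially"
    by (rule order_tendstoD(2)) simp
  then obtain N where N: "c * (r / \<rho>) ^ Suc N < 1"
    unfolding eventually_sequentially by (meson le_SucI order_refl)
  have "(adj_op m E ^^ Suc N) (\<lambda>_. 1) i \<le> \<rho> ^ Suc N" if "i < m" for i
  proof -
    have "c * (r / \<rho>) ^ Suc N * \<rho> ^ Suc N = c * r ^ Suc N"
      using r by (simp add: power_divide)
    then have "(adj_op m E ^^ Suc N) (\<lambda>_. 1) i \<le> c * (r / \<rho>) ^ Suc N * \<rho> ^ Suc N"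
      using c[OF that] by presburger
    also have "\<dots> \<le> 1 * \<rho> ^ Suc N"
      using N r by (intro mult_right_mono) auto
    finally show ?thesis
      by simp
  qed
  then show ?thesis
    by blast
qed

text \<open>The supereigenvector is the truncated Neumann series \<open>v = \<Sum>k<n. G\<^sup>k 1 / \<rho>\<^sup>k\<close>,
  with \<open>n\<close> chosen such that \<open>G\<^sup>n 1 \<le> \<rho>\<^sup>n\<close>.\<close>

lemma adj_supereigvec_exists:
  assumes m: "0 < m" and \<rho>: "spectral_radius (adj_mat m E) < \<rho>"
  shows "\<exists>v. (\<forall>i<m. 1 \<le> v i) \<and> (\<forall>i<m. adj_op m E v i \<le> \<rho> * v i)"
proof -
  obtain n where n: "0 < n" "\<And>i. i < m \<Longrightarrow> (adj_op m E ^^ n) (\<lambda>_. 1) i \<le> \<rho> ^ n"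
    using adj_op_funpow_le_pow[OF m \<rho>] by blast
  have \<rho>_pos: "0 < \<rho>"
    using \<rho> spectral_radius_adj_mat_nonneg[OF m, of E] by simp
  define a where "a k i = (adj_op m E ^^ k) (\<lambda>_. 1) i / \<rho> ^ k" for k i
  define v where "v i = (\<Sum>k<n. a k i)" for i
  have a_Suc: "adj_op m E (a k) i = \<rho> * a (Suc k) i" for k i
    unfolding a_def using \<rho>_pos adj_op_cmult[of m E "1 / \<rho> ^ k" "(adj_op m E ^^ k) (\<lambda>_. 1)" i]
    by simp
  have "1 \<le> v i \<and> adj_op m E v i \<le> \<rho> * v i" if i: "i < m" for i
  proof
    have "a 0 i \<le> v i"
      unfolding v_def a_def using n(1) i \<rho>_pos adj_op_funpow_nonneg[of m "\<lambda>_. 1"]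
      by (intro member_le_sum) auto
    then show "1 \<le> v i"
      unfolding a_def by simp
    have "adj_op m E v i = \<rho> * (\<Sum>k<n. a (Suc k) i)"
      unfolding v_def adj_op_sum a_Suc sum_distrib_left ..
    also have "(\<Sum>k<n. a (Suc k) i) = v i - a 0 i + a n i"
      unfolding v_def using sum.lessThan_Suc_shift[of "\<lambda>k. a k i" n] by simp
    also have "\<dots> \<le> v i"
      using n(2)[OF i] \<rho>_pos unfolding a_def by simp
    finally show "adj_op m E v i \<le> \<rho> * v i"
      using \<rho>_pos by simp
  qed
  then show ?thesis by blast
qed

lemma total_inf_upd: "u < m \<Longrightarrow> total_inf m (x(u := a)) + x u = total_inf m x + a"
proof -
  assume u: "u < m"
  have "total_inf m (x(u := a)) = a + (\<Sum>v\<in>{..<m} - {u}. x v)"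
    unfolding total_inf_def using u by (subst sum.remove[of _ u]) auto
  moreover have "total_inf m x = x u + (\<Sum>v\<in>{..<m} - {u}. x v)"
    unfolding total_inf_def using u by (subst sum.remove[of _ u]) auto
  ultimately show ?thesis by simp
qed

lemma total_inf_incr: "u < m \<Longrightarrow> total_inf m (x(u := x u + 1)) = total_inf m x + 1"
  using total_inf_upd[of u m x "x u + 1"] by simp

lemma total_inf_decr: "u < m \<Longrightarrow> 0 < x u \<Longrightarrow> total_inf m (x(u := x u - 1)) + 1 = total_inf m x"
  using total_inf_upd[of u m x "x u - 1"] by simp

lemma loc_state_upd: "loc_state m x \<Longrightarrow> u < m \<Longrightarrow> loc_state m (x(u := a))"
  unfolding loc_state_def by auto

lemma loc_state_eq_zero_iff: "loc_state m x \<Longrightarrow> x = (\<lambda>_. 0) \<longleftrightarrow> total_inf m x = 0"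
  unfolding loc_state_def total_inf_def by (auto simp: fun_eq_iff) (meson lessThan_iff not_le)

lemma finite_loc_states_le: "finite {y. loc_state m y \<and> total_inf m y \<le> K}"
proof -
  let ?ext = "\<lambda>g u. if u < m then g u else 0"
  have "{y. loc_state m y \<and> total_inf m y \<le> K} \<subseteq> ?ext ` PiE {..<m} (\<lambda>_. {..K})"
  proof
    fix y assume y: "y \<in> {y. loc_state m y \<and> total_inf m y \<le> K}"
    have "y u \<le> K" if "u < m" for u
    proof -
      have "y u \<le> total_inf m y"
        unfolding total_inf_def using that by (intro member_le_sum) auto
      then show ?thesis
        using y by simp
    qed
    then have "restrict y {..<m} \<in> PiE {..<m} (\<lambda>_. {..K})"
      by auto
    moreover have "y = ?ext (restrict y {..<m})"
      using y unfolding loc_state_def by (auto simp: fun_eq_iff)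
    ultimately show "y \<in> ?ext ` PiE {..<m} (\<lambda>_. {..K})" by blast
  qed
  then show ?thesis
    by (rule finite_subset) (intro finite_imageI finite_PiE, auto)
qed

definition weighted_total :: "nat \<Rightarrow> (nat \<Rightarrow> real) \<Rightarrow> (nat \<Rightarrow> nat) \<Rightarrow> real" where
  "weighted_total m v x = (\<Sum>u<m. v u * real (x u))"

lemma weighted_total_upd:
  "u < m \<Longrightarrow> weighted_total m v (x(u := a)) = weighted_total m v x - v u * real (x u) + v u * real a"
proof -
  assume u: "u < m"
  have "weighted_total m v (x(u := a)) = v u * real a + (\<Sum>j\<in>{..<m} - {u}. v j * real (x j))"
    unfolding weighted_total_def using u by (subst sum.remove[of _ u]) auto
  moreover have "weighted_total m v x = v u * real (x u) + (\<Sum>j\<in>{..<m} - {u}. v j * real (x j))"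
    unfolding weighted_total_def using u by (subst sum.remove[of _ u]) auto
  ultimately show ?thesis by simp
qed

lemma weighted_total_incr: "u < m \<Longrightarrow> weighted_total m v (x(u := x u + 1)) = weighted_total m v x + v u"
  by (simp add: weighted_total_upd algebra_simps)

lemma weighted_total_decr:
  "u < m \<Longrightarrow> 0 < x u \<Longrightarrow> weighted_total m v (x(u := x u - 1)) = weighted_total m v x - v u"
  by (simp add: weighted_total_upd algebra_simps of_nat_diff)

lemma weighted_total_nonneg: "(\<And>i. i < m \<Longrightarrow> 0 \<le> v i) \<Longrightarrow> 0 \<le> weighted_total m v x"
  unfolding weighted_total_def by (auto intro!: sum_nonneg)

lemma weighted_total_ge: "(\<And>i. i < m \<Longrightarrow> c \<le> v i) \<Longrightarrow> c * real (total_inf m x) \<le> weighted_total m v x"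
  unfolding weighted_total_def total_inf_def
  by (simp add: of_nat_sum sum_distrib_left) (intro sum_mono, simp add: mult_right_mono)

lemma weighted_total_le: "(\<And>i. i < m \<Longrightarrow> v i \<le> c) \<Longrightarrow> weighted_total m v x \<le> c * real (total_inf m x)"
  unfolding weighted_total_def total_inf_def
  by (simp add: of_nat_sum sum_distrib_left) (intro sum_mono, simp add: mult_right_mono)

lemma weighted_total_ge_entry:
  "(\<And>i. i < m \<Longrightarrow> 0 \<le> v i) \<Longrightarrow> u < m \<Longrightarrow> v u * real (x u) \<le> weighted_total m v x"
  unfolding weighted_total_def by (rule member_le_sum) auto

lemma nn_integral_count_space_point:
  "(\<integral>\<^sup>+y. (if y = a then c else 0) * F y \<partial>count_space UNIV) = c * F a"
  by (subst nn_integral_count_space'[of "{a}"]) auto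

lemma nn_integral_count_space_ge_point: "f a \<le> (\<integral>\<^sup>+x. f x \<partial>count_space UNIV)"
proof -
  have "f a = (\<integral>\<^sup>+x. (if x = a then f a else 0) * 1 \<partial>count_space UNIV)"
    using nn_integral_count_space_point[of a "f a" "\<lambda>_. 1"] by simp
  also have "\<dots> \<le> (\<integral>\<^sup>+x. f x \<partial>count_space UNIV)"
    by (intro nn_integral_mono) auto
  finally show ?thesis .
qed

lemma ln_diff_le: "0 < (a::real) \<Longrightarrow> 0 < b \<Longrightarrow> ln b - ln a \<le> (b - a) / a"
  using ln_le_minus_one[of "b / a"] by (simp add: ln_div diff_divide_distrib)

lemma one_minus_exp_neg_ge: "0 \<le> (t::real) \<Longrightarrow> t - t\<^sup>2 \<le> 1 - exp (- t)"
proof -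
  assume t: "0 \<le> t"
  have "exp (- t) \<le> 1 / (1 + t)"
    using exp_ge_add_one_self[of t] t by (simp add: exp_minus field_simps)
  also have "\<dots> \<le> 1 - t + t\<^sup>2"
    using t by (simp add: field_simps power2_eq_square)
  finally show ?thesis by simp
qed

lemma one_minus_exp_ge: "0 \<le> (t::real) \<Longrightarrow> t \<le> 1 \<Longrightarrow> - t - t\<^sup>2 \<le> 1 - exp t"
  using exp_bound[of t] by simp

lemma truncated_geometric_drift:
  fixes \<theta> \<delta> U :: real and n N :: nat
  assumes \<theta>: "0 < \<theta>" "\<theta> < 1" and U: "0 \<le> U" "U * \<theta> \<le> \<delta> * n / 2" and \<delta>: "0 < \<delta>" and n: "1 \<le> n"
  shows "U * (\<theta> ^ min n (Suc N) - \<theta> ^ min (n + 1) (Suc N))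
      + \<delta> * n * (\<theta> ^ min n (Suc N) - \<theta> ^ min (n - 1) (Suc N))
    \<le> (if N < n then 0 else - (\<theta> ^ N * (1 - \<theta>) * \<delta> / 2))"
proof (cases "N < n")
  case True
  have "\<theta> ^ min n (Suc N) \<le> \<theta> ^ min (n - 1) (Suc N)"
    using \<theta> by (intro power_decreasing) auto
  moreover have "min (n + 1) (Suc N) = min n (Suc N)"
    using True by simp
  ultimately show ?thesis
    using True \<delta> by (simp add: mult_nonneg_nonpos)
next
  case False
  define t where "t = \<theta> ^ (n - 1)"
  have t: "\<theta> ^ n = \<theta> * t" "\<theta> ^ (n + 1) = \<theta> * \<theta> * t"
    unfolding t_def using n by (simp_all add: power_eq_if)
  have "U * (\<theta> ^ n - \<theta> ^ (n + 1)) + \<delta> * n * (\<theta> ^ n - \<theta> ^ (n - 1)) = t * (1 - \<theta>) * (U * \<theta> - \<delta> * n)"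
    unfolding t t_def[symmetric] by (simp add: algebra_simps)
  also have "\<dots> \<le> t * (1 - \<theta>) * (- (\<delta> / 2))"
  proof (rule mult_left_mono)
    have "\<delta> * 1 \<le> \<delta> * real n"
      using n \<delta> by (intro mult_left_mono) auto
    then show "U * \<theta> - \<delta> * n \<le> - (\<delta> / 2)"
      using U(2) by linarith
    show "0 \<le> t * (1 - \<theta>)"
      unfolding t_def using \<theta> by simp
  qed
  also have "\<dots> \<le> \<theta> ^ N * (1 - \<theta>) * (- (\<delta> / 2))"
  proof (rule mult_right_mono_neg)
    show "\<theta> ^ N * (1 - \<theta>) \<le> t * (1 - \<theta>)"
      unfolding t_def using \<theta> False by (intro mult_right_mono power_decreasing) auto
  qed (use \<delta> in simp)
  finally have "U * (\<theta> ^ n - \<theta> ^ (n + 1)) + \<delta> * n * (\<theta> ^ n - \<theta> ^ (n - 1))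
      \<le> - (\<theta> ^ N * (1 - \<theta>) * \<delta> / 2)"
    by simp
  moreover have "min n (Suc N) = n" "min (n + 1) (Suc N) = n + 1" "min (n - 1) (Suc N) = n - 1"
    using False by auto
  ultimately show ?thesis
    using False by presburger
qed

lemma ln_affine_le:
  fixes c K W n :: real
  assumes c: "0 \<le> c" and K: "0 \<le> K" and W: "0 \<le> W" and n: "2 \<le> n"
  shows "c * ln (1 + W * n) + K \<le> (c + (c * ln (1 + W) + K) / ln 2) * ln n"
proof -
  have "0 \<le> W * n"
    using W n by simp
  then have "ln (1 + W * n) \<le> ln ((1 + W) * n)"
    using n by (intro ln_mono) (auto simp: algebra_simps)
  also have "\<dots> = ln (1 + W) + ln n"
    using W n by (simp add: ln_mult)
  finally have "c * ln (1 + W * n) \<le> c * (ln (1 + W) + ln n)"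
    using c by (rule mult_left_mono)
  then have "c * ln (1 + W * n) + K \<le> c * ln n + (c * ln (1 + W) + K) * 1"
    by (simp add: algebra_simps)
  also have "\<dots> \<le> c * ln n + (c * ln (1 + W) + K) * (ln n / ln 2)"
    using c K W n by (intro add_left_mono mult_left_mono) auto
  also have "\<dots> = (c + (c * ln (1 + W) + K) / ln 2) * ln n"
    by (simp add: field_simps)
  finally show ?thesis .
qed

lemma drift_ratio_bounds:
  fixes D \<delta> :: real
  assumes "0 \<le> D" "0 < \<delta>"
  shows "0 < \<delta> / (2 * (D + \<delta>))" "\<delta> / (2 * (D + \<delta>)) < 1" "D * (\<delta> / (2 * (D + \<delta>))) \<le> \<delta> / 2"
proof -
  show "0 < \<delta> / (2 * (D + \<delta>))" "\<delta> / (2 * (D + \<delta>)) < 1"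
    using assms by (simp_all add: field_simps)
  have "D * (\<delta> / (2 * (D + \<delta>))) = \<delta> / 2 * (D / (D + \<delta>))"
    by (simp add: field_simps)
  also have "\<dots> \<le> \<delta> / 2 * 1"
    using assms by (intro mult_left_mono) auto
  finally show "D * (\<delta> / (2 * (D + \<delta>))) \<le> \<delta> / 2"
    by simp
qed

lemma affine_less_above:
  fixes b s c d :: real
  assumes b: "0 \<le> b" and less: "b * s + c < d"
  shows "\<exists>\<rho>>s. b * \<rho> + c < d"
proof -
  define gap where "gap = d - (b * s + c)"
  have gap: "0 < gap"
    using less unfolding gap_def by simp
  have "b * (gap / (2 * (b + 1))) = gap / 2 * (b / (b + 1))"
    by (simp add: field_simps)
  also have "\<dots> \<le> gap / 2 * 1"
    using gap b by (intro mult_left_mono) auto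
  moreover have "b * (s + gap / (2 * (b + 1))) + c = (b * s + c) + b * (gap / (2 * (b + 1)))"
    by (simp add: distrib_left)
  moreover have "b * s + c = d - gap"
    unfolding gap_def by simp
  ultimately have "b * (s + gap / (2 * (b + 1))) + c < d"
    using gap by linarith
  moreover have "s < s + gap / (2 * (b + 1))"
    using gap b by simp
  ultimately show ?thesis
    by blast
qed

lemma eventually_margin_below:
  fixes f g :: "nat \<Rightarrow> real"
  assumes "f \<longlonglongrightarrow> a" "g \<longlonglongrightarrow> b" "a * r + b < c"
  shows "\<exists>\<epsilon>>0. \<exists>N. \<forall>n>N. f n * r + g n \<le> c - \<epsilon>"
proof -
  define \<epsilon> where "\<epsilon> = (c - (a * r + b)) / 2"
  have "(\<lambda>n. f n * r + g n) \<longlonglongrightarrow> a * r + b"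
    using assms by (intro tendsto_intros)
  moreover have "a * r + b < c - \<epsilon>"
    using assms(3) unfolding \<epsilon>_def by (simp add: field_simps)
  ultimately have "eventually (\<lambda>n. f n * r + g n < c - \<epsilon>) sequentially"
    by (rule order_tendstoD(2))
  then obtain N where "\<And>n. N \<le> n \<Longrightarrow> f n * r + g n < c - \<epsilon>"
    unfolding eventually_sequentially by blast
  moreover have "0 < \<epsilon>"
    using assms(3) unfolding \<epsilon>_def by (simp add: field_simps)
  ultimately show ?thesis
    by (intro exI[of _ \<epsilon>] exI[of _ N]) (auto intro: less_imp_le)
qed

lemma eventually_margin_above:
  fixes f g :: "nat \<Rightarrow> real"
  assumes "f \<longlonglongrightarrow> a" "g \<longlonglongrightarrow> b" "c < a * r + b"
  shows "\<exists>\<epsilon>>0. \<exists>N. \<forall>n>N. c + \<epsilon> \<le> f n * r + g n"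
proof -
  have "(\<lambda>n. - f n) \<longlonglongrightarrow> - a" "(\<lambda>n. - g n) \<longlonglongrightarrow> - b" "- a * r + - b < - c"
    using assms by (auto intro: tendsto_minus)
  then obtain \<epsilon> N where "0 < \<epsilon>" "\<And>n. N < n \<Longrightarrow> - f n * r + - g n \<le> - c - \<epsilon>"
    by (blast dest: eventually_margin_below)
  then have "\<forall>n>N. c + \<epsilon> \<le> f n * r + g n"
    by (smt (verit) mult_minus_left)
  then show ?thesis
    using \<open>0 < \<epsilon>\<close> by blast
qed

lemma bounded_range_le: "bounded (range f) \<Longrightarrow> \<exists>B. \<forall>n. f n \<le> (B :: real)"
  unfolding bounded_iff by (metis abs_le_D1 rangeI real_norm_def)

lemma suminf_ennreal_harmonic:
  assumes R: "0 < R"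
  shows "(\<Sum>j. ennreal (1 / (R * real (M + j)))) = \<infinity>"
proof (rule ccontr)
  assume "(\<Sum>j. ennreal (1 / (R * real (M + j)))) \<noteq> \<infinity>"
  then have "summable (\<lambda>j. 1 / (R * real (M + j)))"
    using summable_suminf_not_top[of "\<lambda>j. 1 / (R * real (M + j))"] R by auto
  then have "summable (\<lambda>j. R * (1 / (R * real (M + j))))"
    by (rule summable_mult)
  moreover have "R * (1 / (R * real (M + j))) = inverse (real (j + M))" for j
    using R by (simp add: divide_inverse inverse_mult_distrib add.commute)
  ultimately have "summable (\<lambda>j. inverse (real (j + M)))"
    by simp
  then have "summable (\<lambda>n. inverse (real n))"
    by (rule summable_iff_shift[THEN iffD1])
  then show False
    using not_summable_harmonic[where 'a = real] by simp
qed

section \<open>The jump chain\<close>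

locale epidemic =
  fixes m :: nat and E :: "nat \<Rightarrow> nat \<Rightarrow> bool" and \<beta> \<beta>int :: "nat \<Rightarrow> real" and \<delta> :: real
  assumes \<beta>_pos: "\<And>n. 0 < \<beta> n" and \<beta>int_pos: "\<And>n. 0 < \<beta>int n" and \<delta>_pos: "0 < \<delta>"
begin

abbreviation "up \<equiv> up_rate m E \<beta> \<beta>int"
abbreviation "down \<equiv> down_rate \<delta>"
abbreviation "q \<equiv> total_rate m E \<beta> \<beta>int \<delta>"
abbreviation "P \<equiv> jump_prob m E \<beta> \<beta>int \<delta>"
abbreviation "hold \<equiv> mean_hold m E \<beta> \<beta>int \<delta>"

definition next_expectation :: "((nat \<Rightarrow> nat) \<Rightarrow> ennreal) \<Rightarrow> (nat \<Rightarrow> nat) \<Rightarrow> ennreal" where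
  "next_expectation F x = (\<integral>\<^sup>+y. P x y * F y \<partial>count_space UNIV)"

definition step_expectation :: "(nat \<Rightarrow> nat) \<Rightarrow> nat \<Rightarrow> ((nat \<Rightarrow> nat) \<Rightarrow> ennreal) \<Rightarrow> ennreal" where
  "step_expectation X n F = (\<integral>\<^sup>+x. jump_dist m E \<beta> \<beta>int \<delta> X n x * F x \<partial>count_space UNIV)"

text \<open>At \<open>x u = 0\<close> the truncated subtraction leaves \<open>x\<close> unchanged, but then the recovery rate
  vanishes.\<close>

definition generator :: "((nat \<Rightarrow> nat) \<Rightarrow> real) \<Rightarrow> (nat \<Rightarrow> nat) \<Rightarrow> real" where
  "generator V x =
     (\<Sum>u<m. up x u * (V (x(u := x u + 1)) - V x) + down x u * (V (x(u := x u - 1)) - V x))"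

lemma expected_hitting_time_eq: "expected_hitting_time m E \<beta> \<beta>int \<delta> X = (\<Sum>n. step_expectation X n hold)"
  unfolding expected_hitting_time_def step_expectation_def ..

lemma up_nonneg: "0 \<le> up x u"
  unfolding up_rate_def using \<beta>_pos[of "total_inf m x"] \<beta>int_pos[of "total_inf m x"]
  by (auto intro!: add_nonneg_nonneg sum_nonneg)

lemma up_pos: "0 < x u \<Longrightarrow> 0 < up x u"
  unfolding up_rate_def using \<beta>_pos[of "total_inf m x"] \<beta>int_pos[of "total_inf m x"]
  by (intro add_nonneg_pos sum_nonneg) auto

lemma down_nonneg: "0 \<le> down x u"
  unfolding down_rate_def using \<delta>_pos by simp

lemma total_rate_eq: "q x = (\<Sum>u<m. up x u) + \<delta> * real (total_inf m x)"
  unfolding total_rate_def down_rate_def total_inf_def by (simp add: sum.distrib sum_distrib_left)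

lemma total_rate_pos: "loc_state m x \<Longrightarrow> x \<noteq> (\<lambda>_. 0) \<Longrightarrow> 0 < q x"
  unfolding total_rate_eq using loc_state_eq_zero_iff[of m x] up_nonneg \<delta>_pos
  by (intro add_nonneg_pos sum_nonneg) auto

lemma sum_up_le:
  assumes "\<And>n. \<beta> n \<le> B" and "\<And>n. \<beta>int n \<le> Bi"
  shows "(\<Sum>u<m. up x u) \<le> (B * m + Bi) * real (total_inf m x)"
proof -
  let ?n = "total_inf m x"
  have "up x u \<le> B * real ?n + Bi * real (x u)" for u
  proof -
    have "(\<Sum>j<m. if E u j then \<beta> ?n * real (x j) else 0) \<le> (\<Sum>j<m. \<beta> ?n * real (x j))"
      using \<beta>_pos[of ?n] by (intro sum_mono) auto
    also have "\<dots> = \<beta> ?n * real ?n"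
      unfolding total_inf_def by (simp add: sum_distrib_left)
    also have "\<dots> \<le> B * real ?n"
      using assms(1)[of ?n] by (intro mult_right_mono) auto
    finally show ?thesis
      unfolding up_rate_def using assms(2)[of ?n] mult_right_mono[of "\<beta>int ?n" Bi "real (x u)"]
      by linarith
  qed
  then have "(\<Sum>u<m. up x u) \<le> (\<Sum>u<m. B * real ?n + Bi * real (x u))"
    by (intro sum_mono)
  also have "\<dots> = (B * m + Bi) * real ?n"
    unfolding total_inf_def by (simp add: sum.distrib sum_distrib_left algebra_simps)
  finally show ?thesis .
qed

lemma total_rate_le:
  assumes "\<And>n. \<beta> n \<le> B" and "\<And>n. \<beta>int n \<le> Bi"
  shows "q x \<le> (B * m + Bi + \<delta>) * real (total_inf m x)"
  using sum_up_le[OF assms, of x] unfolding total_rate_eq by (simp add: algebra_simps)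

lemma next_expectation_eq:
  assumes "x \<noteq> (\<lambda>_. 0)"
  shows "next_expectation F x =
    (\<Sum>u<m. ennreal (up x u / q x) * F (x(u := x u + 1)) + ennreal (down x u / q x) * F (x(u := x u - 1)))"
proof -
  let ?up = "\<lambda>u y. (if y = x(u := x u + 1) then ennreal (up x u / q x) else 0)"
  let ?down = "\<lambda>u y. (if 0 < x u \<and> y = x(u := x u - 1) then ennreal (down x u / q x) else 0)"
  have "next_expectation F x = (\<integral>\<^sup>+y. (\<Sum>u<m. ?up u y * F y + ?down u y * F y) \<partial>count_space UNIV)"
    unfolding next_expectation_def jump_prob_def using assms
    by (simp add: sum_distrib_right distrib_right)
  also have "\<dots> = (\<Sum>u<m. (\<integral>\<^sup>+y. ?up u y * F y \<partial>count_space UNIV)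
      + (\<integral>\<^sup>+y. ?down u y * F y \<partial>count_space UNIV))"
    by (simp add: nn_integral_sum nn_integral_add)
  also have "\<dots> = (\<Sum>u<m. ennreal (up x u / q x) * F (x(u := x u + 1))
      + ennreal (down x u / q x) * F (x(u := x u - 1)))"
  proof (intro sum.cong refl arg_cong2[where f = "(+)"])
    fix u
    show "(\<integral>\<^sup>+y. ?up u y * F y \<partial>count_space UNIV) = ennreal (up x u / q x) * F (x(u := x u + 1))"
      by (rule nn_integral_count_space_point)
    show "(\<integral>\<^sup>+y. ?down u y * F y \<partial>count_space UNIV) = ennreal (down x u / q x) * F (x(u := x u - 1))"
      using nn_integral_count_space_point[of "x(u := x u - 1)" "ennreal (down x u / q x)" F]
      by (cases "0 < x u") (simp_all add: down_rate_def)
  qed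
  finally show ?thesis .
qed

lemma next_expectation_zero: "next_expectation F (\<lambda>_. 0) = F (\<lambda>_. 0)"
  unfolding next_expectation_def jump_prob_def using nn_integral_count_space_point[of "\<lambda>_. 0" 1 F]
  by simp

lemma jump_prob_support:
  assumes "loc_state m x" "P x y \<noteq> 0"
  shows "loc_state m y \<and> total_inf m y \<le> total_inf m x + 1"
proof (cases "x = (\<lambda>_. 0)")
  case True
  then show ?thesis
    using assms unfolding jump_prob_def by (auto split: if_splits)
next
  case False
  with assms(2) obtain u where u: "u < m" and
    "(if y = x(u := x u + 1) then ennreal (up x u / q x) else 0)
        + (if 0 < x u \<and> y = x(u := x u - 1) then ennreal (down x u / q x) else 0) \<noteq> 0"
    unfolding jump_prob_def by (auto elim!: sum.not_neutral_contains_not_neutral)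
  then have "y = x(u := x u + 1) \<or> (0 < x u \<and> y = x(u := x u - 1))"
    by (auto split: if_splits)
  then show ?thesis
    using u assms(1) loc_state_upd total_inf_incr[OF u, of x] total_inf_decr[OF u, of x] by auto
qed

lemma jump_dist_support:
  assumes X: "loc_state m X"
  shows "jump_dist m E \<beta> \<beta>int \<delta> X n y \<noteq> 0 \<Longrightarrow> loc_state m y \<and> total_inf m y \<le> total_inf m X + n"
proof (induction n arbitrary: y)
  case 0
  then show ?case using X by (simp split: if_splits)
next
  case (Suc n)
  have "\<exists>x. jump_dist m E \<beta> \<beta>int \<delta> X n x * P x y \<noteq> 0"
  proof (rule ccontr)
    assume "\<not> ?thesis"
    then have "(\<lambda>x. jump_dist m E \<beta> \<beta>int \<delta> X n x * P x y) = (\<lambda>_. 0)"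
      by auto
    then have "jump_dist m E \<beta> \<beta>int \<delta> X (Suc n) y = 0"
      by simp
    then show False
      using Suc by simp
  qed
  then obtain x where "jump_dist m E \<beta> \<beta>int \<delta> X n x \<noteq> 0" "P x y \<noteq> 0"
    by auto
  then show ?case
    using Suc.IH jump_prob_support by fastforce
qed

lemma step_expectation_0: "step_expectation X 0 F = F X"
  unfolding step_expectation_def using nn_integral_count_space_point[of X 1 F]
  by (simp add: eq_commute[of _ X])

lemma step_expectation_finite_sum:
  assumes "loc_state m X"
  shows "step_expectation X n F =
    (\<Sum>x\<in>{y. loc_state m y \<and> total_inf m y \<le> total_inf m X + n}. jump_dist m E \<beta> \<beta>int \<delta> X n x * F x)"
  unfolding step_expectation_def
  by (rule nn_integral_count_space') (use finite_loc_states_le jump_dist_support[OF assms] in auto)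

lemma step_expectation_Suc:
  assumes X: "loc_state m X"
  shows "step_expectation X (Suc n) F = step_expectation X n (next_expectation F)"
proof -
  let ?S = "{y. loc_state m y \<and> total_inf m y \<le> total_inf m X + n}"
  let ?\<mu> = "jump_dist m E \<beta> \<beta>int \<delta> X n"
  have "step_expectation X (Suc n) F = (\<integral>\<^sup>+y. (\<Sum>x\<in>?S. ?\<mu> x * (P x y * F y)) \<partial>count_space UNIV)"
    unfolding step_expectation_def
    by (simp add: step_expectation_finite_sum[OF X, unfolded step_expectation_def]
        sum_distrib_right mult.assoc)
  also have "\<dots> = (\<Sum>x\<in>?S. ?\<mu> x * next_expectation F x)"
    unfolding next_expectation_def by (simp add: nn_integral_sum nn_integral_cmult)
  also have "\<dots> = step_expectation X n (next_expectation F)"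
    by (simp add: step_expectation_finite_sum[OF X])
  finally show ?thesis .
qed

lemma sum_jumps_eq_generator:
  "(\<Sum>u<m. up x u * V (x(u := x u + 1)) + down x u * V (x(u := x u - 1))) = q x * V x + generator V x"
  unfolding generator_def total_rate_def
  by (simp add: algebra_simps sum.distrib sum_subtractf sum_distrib_left)

lemma next_expectation_real:
  assumes x: "loc_state m x" "x \<noteq> (\<lambda>_. 0)" and V: "\<And>y. 0 \<le> V y"
  shows "next_expectation (\<lambda>y. ennreal (V y)) x = ennreal (V x + generator V x / q x)"
proof -
  have q: "0 < q x"
    using total_rate_pos[OF x] .
  have nonneg: "0 \<le> up x u / q x" "0 \<le> down x u / q x" for u
    using up_nonneg down_nonneg q by auto
  have terms: "0 \<le> up x u / q x * V (x(u := x u + 1))" "0 \<le> down x u / q x * V (x(u := x u - 1))" for u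
    using nonneg V by (intro mult_nonneg_nonneg; simp)+
  have "next_expectation (\<lambda>y. ennreal (V y)) x
      = (\<Sum>u<m. ennreal (up x u / q x * V (x(u := x u + 1)) + down x u / q x * V (x(u := x u - 1))))"
    unfolding next_expectation_eq[OF x(2)]
  proof (intro sum.cong refl)
    fix u
    show "ennreal (up x u / q x) * ennreal (V (x(u := x u + 1)))
        + ennreal (down x u / q x) * ennreal (V (x(u := x u - 1)))
      = ennreal (up x u / q x * V (x(u := x u + 1)) + down x u / q x * V (x(u := x u - 1)))"
      using terms[of u] by (simp only: ennreal_plus ennreal_mult'[OF nonneg(1)] ennreal_mult'[OF nonneg(2)])
  qed
  also have "\<dots> = ennreal (\<Sum>u<m. up x u / q x * V (x(u := x u + 1)) + down x u / q x * V (x(u := x u - 1)))"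
    by (rule sum_ennreal) (intro add_nonneg_nonneg terms)
  also have "(\<Sum>u<m. up x u / q x * V (x(u := x u + 1)) + down x u / q x * V (x(u := x u - 1)))
      = V x + generator V x / q x"
    using sum_jumps_eq_generator[of x V] q
    by (simp add: sum_divide_distrib[symmetric] add_divide_distrib[symmetric] field_simps)
  finally show ?thesis .
qed

lemma generator_mono:
  assumes "\<And>u. u < m \<Longrightarrow> F (x(u := x u + 1)) - F x \<le> H (x(u := x u + 1)) - H x"
    and "\<And>u. u < m \<Longrightarrow> 0 < x u \<Longrightarrow> F (x(u := x u - 1)) - F x \<le> H (x(u := x u - 1)) - H x"
  shows "generator F x \<le> generator H x"
  unfolding generator_def
proof (intro sum_mono add_mono)
  fix u assume "u \<in> {..<m}"
  then show "up x u * (F (x(u := x u + 1)) - F x) \<le> up x u * (H (x(u := x u + 1)) - H x)"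
    using assms(1) up_nonneg by (intro mult_left_mono) auto
  show "down x u * (F (x(u := x u - 1)) - F x) \<le> down x u * (H (x(u := x u - 1)) - H x)"
    using \<open>u \<in> {..<m}\<close> assms(2) down_nonneg
    by (cases "0 < x u") (auto intro: mult_left_mono simp: down_rate_def)
qed

lemma step_expectation_add:
  "step_expectation X n (\<lambda>x. F x + G x) = step_expectation X n F + step_expectation X n G"
  unfolding step_expectation_def by (simp add: distrib_left nn_integral_add)

lemma step_expectation_mono:
  assumes "loc_state m X"
    and "\<And>x. loc_state m x \<Longrightarrow> total_inf m x \<le> total_inf m X + n \<Longrightarrow> F x \<le> G x"
  shows "step_expectation X n F \<le> step_expectation X n G"
  unfolding step_expectation_def
proof (intro nn_integral_mono)
  fix x
  show "jump_dist m E \<beta> \<beta>int \<delta> X n x * F x \<le> jump_dist m E \<beta> \<beta>int \<delta> X n x * G x"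
    using jump_dist_support[OF assms(1), of n x] assms(2)[of x]
    by (cases "jump_dist m E \<beta> \<beta>int \<delta> X n x = 0") (auto intro: mult_left_mono)
qed

lemma expected_hitting_time_le_excessive:
  assumes X: "loc_state m X"
    and V: "\<And>x. loc_state m x \<Longrightarrow> hold x + next_expectation V x \<le> V x"
  shows "expected_hitting_time m E \<beta> \<beta>int \<delta> X \<le> V X"
proof -
  have partial: "(\<Sum>k<N. step_expectation X k hold) + step_expectation X N V \<le> V X" for N
  proof (induction N)
    case 0
    show ?case by (simp add: step_expectation_0)
  next
    case (Suc N)
    have "step_expectation X N hold + step_expectation X (Suc N) V
        = step_expectation X N (\<lambda>x. hold x + next_expectation V x)"
      by (simp add: step_expectation_Suc[OF X] step_expectation_add)
    also have "\<dots> \<le> step_expectation X N V"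
      by (rule step_expectation_mono[OF X V])
    finally have step: "step_expectation X N hold + step_expectation X (Suc N) V \<le> step_expectation X N V" .
    have "(\<Sum>k<Suc N. step_expectation X k hold) + step_expectation X (Suc N) V
        = (\<Sum>k<N. step_expectation X k hold) + (step_expectation X N hold + step_expectation X (Suc N) V)"
      by (simp add: add.assoc)
    also have "\<dots> \<le> (\<Sum>k<N. step_expectation X k hold) + step_expectation X N V"
      using step by (rule add_left_mono)
    also have "\<dots> \<le> V X"
      by (rule Suc.IH)
    finally show ?case .
  qed
  show ?thesis
    unfolding expected_hitting_time_eq
  proof (rule suminf_le_const)
    fix N
    show "(\<Sum>k<N. step_expectation X k hold) \<le> V X"
      by (rule order_trans[OF _ partial[of N]]) simp
  qed simp
qed

lemma expected_hitting_time_le_Lyapunov: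
  assumes X: "loc_state m X" and V_nonneg: "\<And>y. 0 \<le> V y"
    and drift: "\<And>x. loc_state m x \<Longrightarrow> x \<noteq> (\<lambda>_. 0) \<Longrightarrow> 1 + generator V x \<le> 0"
  shows "expected_hitting_time m E \<beta> \<beta>int \<delta> X \<le> ennreal (V X)"
proof (rule expected_hitting_time_le_excessive[OF X])
  fix x assume x: "loc_state m x"
  show "hold x + next_expectation (\<lambda>y. ennreal (V y)) x \<le> ennreal (V x)"
  proof (cases "x = (\<lambda>_. 0)")
    case True
    then show ?thesis by (simp add: next_expectation_zero mean_hold_def)
  next
    case False
    have q: "0 < q x"
      using total_rate_pos[OF x False] .
    have "1 / q x + generator V x / q x \<le> 0"
      using drift[OF x False] q by (simp add: add_divide_distrib[symmetric] divide_nonpos_pos)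
    then have "1 / q x + (V x + generator V x / q x) \<le> V x"
      by linarith
    moreover have "0 \<le> V x + generator V x / q x"
    proof -
      have "0 \<le> q x * V x + generator V x"
        unfolding sum_jumps_eq_generator[symmetric] using V_nonneg up_nonneg down_nonneg
        by (intro sum_nonneg add_nonneg_nonneg mult_nonneg_nonneg)
      moreover have "V x + generator V x / q x = (q x * V x + generator V x) / q x"
        using q by (simp add: field_simps)
      ultimately show ?thesis
        using q by simp
    qed
    ultimately have "ennreal (1 / q x) + ennreal (V x + generator V x / q x) \<le> ennreal (V x)"
      using q by (simp only: ennreal_plus[symmetric] ennreal_leI less_imp_le divide_nonneg_pos zero_le_one)
    then show ?thesis
      unfolding next_expectation_real[OF x False V_nonneg] mean_hold_def using False by simp
  qed
qed

lemma next_expectation_ge: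
  assumes x: "loc_state m x" and drift: "x \<noteq> (\<lambda>_. 0) \<Longrightarrow> 0 < g x \<Longrightarrow> 0 \<le> generator g x"
  shows "ennreal (g x) \<le> next_expectation (\<lambda>y. ennreal (g y)) x"
proof (cases "x = (\<lambda>_. 0) \<or> g x \<le> 0")
  case True
  then show ?thesis by (auto simp: next_expectation_zero ennreal_neg)
next
  case False
  then have x0: "x \<noteq> (\<lambda>_. 0)" and g_pos: "0 < g x" by auto
  define g' where "g' y = max 0 (g y)" for y
  have q: "0 < q x"
    using total_rate_pos[OF x x0] .
  have "generator g x \<le> generator g' x"
    using g_pos unfolding g'_def by (intro generator_mono) auto
  then have "generator g x / q x \<le> generator g' x / q x"
    using q by (simp add: divide_right_mono)
  moreover have "0 \<le> generator g x / q x"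
    using drift[OF x0 g_pos] q by simp
  moreover have "g' x = g x"
    using g_pos unfolding g'_def by simp
  ultimately have "ennreal (g x) \<le> ennreal (g' x + generator g' x / q x)"
    by (intro ennreal_leI) linarith
  also have "\<dots> = next_expectation (\<lambda>y. ennreal (g' y)) x"
    by (rule next_expectation_real[OF x x0, symmetric]) (simp add: g'_def)
  also have "(\<lambda>y. ennreal (g' y)) = (\<lambda>y. ennreal (g y))"
    unfolding g'_def by (simp add: ennreal_max_0)
  finally show ?thesis .
qed

lemma step_expectation_mono_subharmonic:
  assumes X: "loc_state m X" and sub: "\<And>x. loc_state m x \<Longrightarrow> F x \<le> next_expectation F x"
  shows "step_expectation X n F \<le> step_expectation X (n + j) F"
proof (induction j)
  case 0
  show ?case by simp
next
  case (Suc j)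
  have "step_expectation X (n + j) F \<le> step_expectation X (n + j) (next_expectation F)"
    by (rule step_expectation_mono[OF X sub])
  then show ?case
    using Suc.IH by (simp add: step_expectation_Suc[OF X])
qed

lemma step_expectation_multc: "step_expectation X n (\<lambda>x. F x * c) = step_expectation X n F * c"
  unfolding step_expectation_def by (simp add: mult.assoc[symmetric] nn_integral_multc)

lemma jump_prob_incr_pos:
  assumes y: "loc_state m y" and u: "u < m" "0 < y u"
  shows "0 < P y (y(u := y u + 1))"
proof -
  have y0: "y \<noteq> (\<lambda>_. 0)"
    using u by auto
  let ?t = "\<lambda>w. (if y(u := y u + 1) = y(w := y w + 1) then ennreal (up y w / q y) else 0)
        + (if 0 < y w \<and> y(u := y u + 1) = y(w := y w - 1) then ennreal (down y w / q y) else 0)"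
  have "0 < ennreal (up y u / q y)"
    using up_pos[of y u, OF u(2)] total_rate_pos[OF y y0] by simp
  also have "\<dots> \<le> ?t u"
    by simp
  also have "\<dots> \<le> (\<Sum>w<m. ?t w)"
    using u by (intro member_le_sum) auto
  also have "\<dots> = P y (y(u := y u + 1))"
    unfolding jump_prob_def using y0 by simp
  finally show ?thesis .
qed

lemma jump_dist_incr_pos:
  assumes X: "loc_state m X" and u: "u < m" "0 < X u"
  shows "0 < jump_dist m E \<beta> \<beta>int \<delta> X k (X(u := X u + k))"
proof (induction k)
  case 0
  then show ?case by simp
next
  case (Suc k)
  let ?y = "X(u := X u + k)"
  have "0 < P ?y (?y(u := ?y u + 1))"
    using jump_prob_incr_pos[OF loc_state_upd[OF X u(1)] u(1)] u(2) by simp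
  then have "0 < jump_dist m E \<beta> \<beta>int \<delta> X k ?y * P ?y (?y(u := ?y u + 1))"
    using Suc.IH unfolding ennreal_zero_less_mult_iff by blast
  also have "\<dots> \<le> (\<integral>\<^sup>+x. jump_dist m E \<beta> \<beta>int \<delta> X k x * P x (?y(u := ?y u + 1)) \<partial>count_space UNIV)"
    by (rule nn_integral_count_space_ge_point)
  also have "\<dots> = jump_dist m E \<beta> \<beta>int \<delta> X (Suc k) (?y(u := ?y u + 1))"
    by simp
  also have "?y(u := ?y u + 1) = X(u := X u + Suc k)"
    by simp
  finally show ?case .
qed

lemma mean_hold_ge:
  assumes x: "loc_state m x" "x \<noteq> (\<lambda>_. 0)" and rate: "q x \<le> R * real (total_inf m x)"
    and K: "total_inf m x \<le> K" and R: "0 < R"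
  shows "ennreal (1 / (R * real K)) \<le> hold x"
proof -
  have "R * real (total_inf m x) \<le> R * real K"
    using K R by (intro mult_left_mono) auto
  then have "q x \<le> R * real K"
    using rate by linarith
  then show ?thesis
    unfolding mean_hold_def using x total_rate_pos[OF x] by (simp add: ennreal_leI divide_left_mono)
qed

text \<open>The expectation of the subharmonic \<open>g\<close> stays positive along the jump chain, while the mean
  holding time after \<open>n\<close> jumps is of order \<open>1/n\<close>; so the expected hitting time dominates a
  harmonic series.\<close>

lemma expected_hitting_time_infinite:
  assumes X: "loc_state m X" and R: "0 < R"
    and rate: "\<And>x. loc_state m x \<Longrightarrow> q x \<le> R * real (total_inf m x)"
    and g_le: "\<And>x. g x \<le> 1" and g_zero: "g (\<lambda>_. 0) \<le> 0"
    and sub: "\<And>x. loc_state m x \<Longrightarrow> ennreal (g x) \<le> next_expectation (\<lambda>y. ennreal (g y)) x"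
    and reach: "0 < jump_dist m E \<beta> \<beta>int \<delta> X k y" "0 < g y"
  shows "expected_hitting_time m E \<beta> \<beta>int \<delta> X = \<infinity>"
proof -
  let ?G = "\<lambda>y. ennreal (g y)"
  define c where "c n = ennreal (1 / (R * real (total_inf m X + n)))" for n
  have hold_ge: "?G x * c n \<le> hold x"
    if x: "loc_state m x" "total_inf m x \<le> total_inf m X + n" for x n
  proof (cases "x = (\<lambda>_. 0)")
    case True
    then show ?thesis using g_zero by (simp add: ennreal_neg)
  next
    case False
    have "?G x * c n \<le> 1 * hold x"
      unfolding c_def using g_le[of x] mean_hold_ge[OF x(1) False rate[OF x(1)] x(2) R]
      by (intro mult_mono) (auto simp: ennreal_le_1)
    then show ?thesis
      by simp
  qed
  define p where "p = step_expectation X k ?G"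
  have "0 < jump_dist m E \<beta> \<beta>int \<delta> X k y * ?G y"
    using reach by (simp add: ennreal_zero_less_mult_iff)
  then have p_pos: "0 < p"
    unfolding p_def step_expectation_def
    by (rule less_le_trans[OF _
        nn_integral_count_space_ge_point[of "\<lambda>x. jump_dist m E \<beta> \<beta>int \<delta> X k x * ?G x"]])
  have "p * c (k + j) \<le> step_expectation X (k + j) hold" for j
  proof -
    have "p * c (k + j) \<le> step_expectation X (k + j) ?G * c (k + j)"
      unfolding p_def using step_expectation_mono_subharmonic[OF X sub]
      by (rule mult_right_mono[OF _ zero_le])
    also have "\<dots> \<le> step_expectation X (k + j) hold"
      unfolding step_expectation_multc[symmetric] using hold_ge
      by (intro step_expectation_mono[OF X])
    finally show ?thesis .
  qed
  then have "(\<Sum>j. p * c (j + k)) \<le> (\<Sum>j. step_expectation X (j + k) hold)"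
    by (intro suminf_le) (auto simp: add.commute)
  also have "\<dots> \<le> (\<Sum>n. step_expectation X n hold)"
    using suminf_offset[of "\<lambda>n. step_expectation X n hold" k] by simp
  finally have "(\<Sum>j. p * c (j + k)) \<le> expected_hitting_time m E \<beta> \<beta>int \<delta> X"
    unfolding expected_hitting_time_eq .
  moreover have "(\<Sum>j. p * c (j + k)) = \<infinity>"
  proof -
    have "(\<lambda>j. c (j + k)) = (\<lambda>j. ennreal (1 / (R * real (total_inf m X + k + j))))"
      unfolding c_def by (simp add: ac_simps)
    then show ?thesis
      using suminf_ennreal_harmonic[OF R, of "total_inf m X + k"] p_pos
      by (simp add: ennreal_suminf_cmult ennreal_mult_top)
  qed
  ultimately show ?thesis
    by (simp add: top_unique)
qed

lemma generator_add: "generator (\<lambda>y. F y + G y) x = generator F x + generator G x"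
  unfolding generator_def sum.distrib[symmetric] by (intro sum.cong refl) (simp add: algebra_simps)

lemma generator_cmult: "generator (\<lambda>y. c * F y) x = c * generator F x"
  unfolding generator_def by (simp add: algebra_simps sum_distrib_left)

lemma generator_const: "generator (\<lambda>_. c) x = 0"
  unfolding generator_def by simp

lemma sum_down_eq: "(\<Sum>u<m. down x u) = \<delta> * real (total_inf m x)"
  unfolding down_rate_def total_inf_def by (simp add: sum_distrib_left)

lemma generator_total_fun:
  fixes \<phi> :: "nat \<Rightarrow> real" and x :: "nat \<Rightarrow> nat"
  defines "n \<equiv> total_inf m x"
  shows "generator (\<lambda>y. \<phi> (total_inf m y)) x
    = (\<Sum>u<m. up x u) * (\<phi> (n + 1) - \<phi> n) + \<delta> * real n * (\<phi> (n - 1) - \<phi> n)"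
proof -
  have down_step:
    "down x u * (\<phi> (total_inf m (x(u := x u - 1))) - \<phi> n) = down x u * (\<phi> (n - 1) - \<phi> n)"
    if "u < m" for u
  proof (cases "0 < x u")
    case True
    then have "total_inf m (x(u := x u - 1)) = n - 1"
      using total_inf_decr[of u m x, OF that True] unfolding n_def by linarith
    then show ?thesis by simp
  next
    case False
    then show ?thesis by (simp add: down_rate_def)
  qed
  have "generator (\<lambda>y. \<phi> (total_inf m y)) x
      = (\<Sum>u<m. up x u * (\<phi> (n + 1) - \<phi> n) + down x u * (\<phi> (n - 1) - \<phi> n))"
    unfolding generator_def
  proof (intro sum.cong refl)
    fix u assume "u \<in> {..<m}"
    then have u: "u < m" by simp
    show "up x u * (\<phi> (total_inf m (x(u := x u + 1))) - \<phi> (total_inf m x))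
        + down x u * (\<phi> (total_inf m (x(u := x u - 1))) - \<phi> (total_inf m x))
      = up x u * (\<phi> (n + 1) - \<phi> n) + down x u * (\<phi> (n - 1) - \<phi> n)"
      unfolding total_inf_incr[OF u] n_def[symmetric] down_step[OF u] ..
  qed
  also have "\<dots> = (\<Sum>u<m. up x u) * (\<phi> (n + 1) - \<phi> n) + \<delta> * real n * (\<phi> (n - 1) - \<phi> n)"
    unfolding sum.distrib sum_distrib_right[symmetric] sum_down_eq n_def ..
  finally show ?thesis .
qed

lemma up_rate_eq_adj_op:
  "up x u = \<beta> (total_inf m x) * adj_op m E (\<lambda>j. real (x j)) u + \<beta>int (total_inf m x) * real (x u)"
  unfolding up_rate_def adj_op_def by (simp add: sum_distrib_left if_distrib cong: if_cong)

lemma generator_weighted_total_eq_sum: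
  "generator (weighted_total m v) x = (\<Sum>u<m. v u * up x u - v u * down x u)"
proof -
  have "up x u * (weighted_total m v (x(u := x u + 1)) - weighted_total m v x)
      + down x u * (weighted_total m v (x(u := x u - 1)) - weighted_total m v x)
      = v u * up x u - v u * down x u" if "u < m" for u
  proof (cases "0 < x u")
    case True
    then show ?thesis
      unfolding weighted_total_incr[where x = x and v = v, OF that]
        weighted_total_decr[where x = x and v = v, OF that True]
      by (simp add: algebra_simps)
  next
    case False
    then show ?thesis
      unfolding weighted_total_incr[where x = x and v = v, OF that]
      by (simp add: down_rate_def algebra_simps)
  qed
  then show ?thesis
    unfolding generator_def by (intro sum.cong) auto
qed

lemma generator_weighted_total:
  fixes x :: "nat \<Rightarrow> nat"
  assumes graph: "simple_graph_on m E"
  defines "n \<equiv> total_inf m x"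
  shows "generator (weighted_total m v) x
    = \<beta> n * (\<Sum>j<m. real (x j) * adj_op m E v j) + (\<beta>int n - \<delta>) * weighted_total m v x"
proof -
  have "generator (weighted_total m v) x = (\<Sum>u<m. v u * up x u - v u * down x u)"
    by (rule generator_weighted_total_eq_sum)
  also have "\<dots> = \<beta> n * (\<Sum>u<m. v u * adj_op m E (\<lambda>j. real (x j)) u)
      + \<beta>int n * weighted_total m v x - \<delta> * weighted_total m v x"
    unfolding up_rate_eq_adj_op weighted_total_def down_rate_def n_def
    by (simp add: sum_subtractf sum.distrib sum_distrib_left algebra_simps)
  also have "(\<Sum>u<m. v u * adj_op m E (\<lambda>j. real (x j)) u) = (\<Sum>j<m. real (x j) * adj_op m E v j)"
    by (rule adj_op_symmetric[OF graph])
  finally show ?thesis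
    by (simp add: algebra_simps)
qed

lemma generator_weighted_total_le:
  fixes x :: "nat \<Rightarrow> nat"
  assumes graph: "simple_graph_on m E" and vG: "\<And>i. i < m \<Longrightarrow> adj_op m E v i \<le> \<rho> * v i"
  defines "n \<equiv> total_inf m x"
  shows "generator (weighted_total m v) x \<le> (\<beta> n * \<rho> + \<beta>int n - \<delta>) * weighted_total m v x"
proof -
  have "(\<Sum>j<m. real (x j) * adj_op m E v j) \<le> (\<Sum>j<m. real (x j) * (\<rho> * v j))"
    using vG by (intro sum_mono mult_left_mono) auto
  also have "\<dots> = \<rho> * weighted_total m v x"
    unfolding weighted_total_def by (simp add: sum_distrib_left algebra_simps)
  finally have "\<beta> n * (\<Sum>j<m. real (x j) * adj_op m E v j) \<le> \<beta> n * (\<rho> * weighted_total m v x)"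
    using \<beta>_pos[of n] by (intro mult_left_mono) auto
  then show ?thesis
    unfolding generator_weighted_total[OF graph] n_def by (simp add: algebra_simps)
qed

lemma generator_weighted_total_ge:
  fixes x :: "nat \<Rightarrow> nat"
  assumes graph: "simple_graph_on m E" and vG: "\<And>i. i < m \<Longrightarrow> l * v i \<le> adj_op m E v i"
  defines "n \<equiv> total_inf m x"
  shows "(\<beta> n * l + \<beta>int n - \<delta>) * weighted_total m v x \<le> generator (weighted_total m v) x"
proof -
  have "l * weighted_total m v x = (\<Sum>j<m. real (x j) * (l * v j))"
    unfolding weighted_total_def by (simp add: sum_distrib_left algebra_simps)
  also have "\<dots> \<le> (\<Sum>j<m. real (x j) * adj_op m E v j)"
    using vG by (intro sum_mono mult_left_mono) auto
  finally have "\<beta> n * (l * weighted_total m v x) \<le> \<beta> n * (\<Sum>j<m. real (x j) * adj_op m E v j)"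
    using \<beta>_pos[of n] by (intro mult_left_mono) auto
  then show ?thesis
    unfolding generator_weighted_total[OF graph] n_def by (simp add: algebra_simps)
qed

lemma generator_ln_weighted_total_le:
  assumes v: "\<And>i. i < m \<Longrightarrow> 0 \<le> v i"
  shows "generator (\<lambda>y. ln (1 + weighted_total m v y)) x
    \<le> generator (weighted_total m v) x / (1 + weighted_total m v x)"
proof -
  define w where "w = weighted_total m v x"
  have w: "0 \<le> w"
    unfolding w_def by (rule weighted_total_nonneg[OF v])
  have "generator (\<lambda>y. ln (1 + weighted_total m v y)) x
      \<le> generator (\<lambda>y. 1 / (1 + w) * weighted_total m v y) x"
  proof (rule generator_mono)
    fix u assume u: "u < m"
    have "ln (1 + w + v u) - ln (1 + w) \<le> v u / (1 + w)"
      using ln_diff_le[of "1 + w" "1 + w + v u"] v[OF u] w by simp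
    then show "ln (1 + weighted_total m v (x(u := x u + 1))) - ln (1 + weighted_total m v x)
        \<le> 1 / (1 + w) * weighted_total m v (x(u := x u + 1)) - 1 / (1 + w) * weighted_total m v x"
      unfolding weighted_total_incr[OF u] w_def[symmetric]
      by (simp add: add.assoc diff_divide_distrib[symmetric])
  next
    fix u assume u: "u < m" and xu: "0 < x u"
    have "v u * 1 \<le> v u * real (x u)"
      using xu v[OF u] by (intro mult_left_mono) auto
    then have "v u \<le> w"
      using weighted_total_ge_entry[where v = v and x = x, OF v u] unfolding w_def by simp
    then have "ln (1 + w - v u) - ln (1 + w) \<le> - v u / (1 + w)"
      using ln_diff_le[of "1 + w" "1 + w - v u"] w by simp
    then show "ln (1 + weighted_total m v (x(u := x u - 1))) - ln (1 + weighted_total m v x)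
        \<le> 1 / (1 + w) * weighted_total m v (x(u := x u - 1)) - 1 / (1 + w) * weighted_total m v x"
      unfolding weighted_total_decr[where x = x, OF u xu] w_def[symmetric]
      by (simp add: add_diff_eq diff_divide_distrib[symmetric])
  qed
  then show ?thesis
    unfolding generator_cmult w_def by simp
qed

lemma generator_exp_weighted_total_ge:
  fixes x :: "nat \<Rightarrow> nat"
  assumes v: "\<And>i. i < m \<Longrightarrow> 0 \<le> v i" "\<And>i. i < m \<Longrightarrow> a * v i \<le> 1" and a: "0 \<le> a"
  defines "w \<equiv> weighted_total m v x"
  shows "exp (- a * w) * (a * generator (weighted_total m v) x - a\<^sup>2 * (\<Sum>u<m. (v u)\<^sup>2 * (up x u + down x u)))
    \<le> generator (\<lambda>y. - exp (- a * weighted_total m v y)) x"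
proof -
  let ?e = "exp (- a * w)"
  have "?e * (a * generator (weighted_total m v) x - a\<^sup>2 * (\<Sum>u<m. (v u)\<^sup>2 * (up x u + down x u)))
      = (\<Sum>u<m. up x u * (?e * (a * v u - (a * v u)\<^sup>2)) + down x u * (?e * (- (a * v u) - (a * v u)\<^sup>2)))"
    unfolding generator_weighted_total_eq_sum sum_distrib_left sum_subtractf[symmetric] sum.distrib[symmetric]
    by (intro sum.cong refl) (simp add: power2_eq_square algebra_simps)
  also have "\<dots> \<le> generator (\<lambda>y. - exp (- a * weighted_total m v y)) x"
    unfolding generator_def
  proof (intro sum_mono add_mono)
    fix u assume "u \<in> {..<m}"
    then have u: "u < m" and t: "0 \<le> a * v u" "a * v u \<le> 1"
      using v a by auto
    have "?e * (a * v u - (a * v u)\<^sup>2) \<le> ?e * (1 - exp (- (a * v u)))"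
      using one_minus_exp_neg_ge[OF t(1)] by simp
    also have "\<dots> = - exp (- a * weighted_total m v (x(u := x u + 1))) - - exp (- a * weighted_total m v x)"
      unfolding weighted_total_incr[OF u] w_def[symmetric]
      by (simp add: distrib_left right_diff_distrib exp_add[symmetric])
    finally show "up x u * (?e * (a * v u - (a * v u)\<^sup>2))
        \<le> up x u * (- exp (- a * weighted_total m v (x(u := x u + 1))) - - exp (- a * weighted_total m v x))"
      by (intro mult_left_mono up_nonneg)
    show "down x u * (?e * (- (a * v u) - (a * v u)\<^sup>2))
        \<le> down x u * (- exp (- a * weighted_total m v (x(u := x u - 1))) - - exp (- a * weighted_total m v x))"
    proof (cases "0 < x u")
      case True
      have "?e * (- (a * v u) - (a * v u)\<^sup>2) \<le> ?e * (1 - exp (a * v u))"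
        using one_minus_exp_ge[OF t] by simp
      also have "\<dots> = - exp (- a * weighted_total m v (x(u := x u - 1))) - - exp (- a * weighted_total m v x)"
      proof -
        have "exp (- a * (w - v u)) = ?e * exp (a * v u)"
          by (simp add: exp_add[symmetric] algebra_simps)
        then show ?thesis
          unfolding weighted_total_decr[where x = x, OF u True] w_def[symmetric]
          by (simp add: algebra_simps)
      qed
      finally show ?thesis
        by (intro mult_left_mono down_nonneg)
    next
      case False
      then show ?thesis by (simp add: down_rate_def)
    qed
  qed
  finally show ?thesis .
qed

lemma generator_ln_weighted_total_bound:
  fixes x :: "nat \<Rightarrow> nat"
  assumes graph: "simple_graph_on m E"
    and v: "\<And>i. i < m \<Longrightarrow> 0 \<le> v i" and vG: "\<And>i. i < m \<Longrightarrow> adj_op m E v i \<le> \<rho> * v i"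
  defines "n \<equiv> total_inf m x" and "w \<equiv> weighted_total m v x"
  shows "generator (\<lambda>y. ln (1 + weighted_total m v y)) x \<le> (\<beta> n * \<rho> + \<beta>int n - \<delta>) * (w / (1 + w))"
proof -
  have "0 \<le> w"
    unfolding w_def by (rule weighted_total_nonneg[OF v])
  then have "generator (weighted_total m v) x / (1 + w) \<le> (\<beta> n * \<rho> + \<beta>int n - \<delta>) * w / (1 + w)"
    using generator_weighted_total_le[where x = x, OF graph vG] unfolding n_def w_def
    by (intro divide_right_mono) auto
  then show ?thesis
    using generator_ln_weighted_total_le[where v = v and x = x, OF v] unfolding w_def by simp
qed

lemma generator_truncated_geometric:
  fixes x :: "nat \<Rightarrow> nat"
  assumes x: "loc_state m x" "x \<noteq> (\<lambda>_. 0)"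
    and bB: "\<And>n. \<beta> n \<le> B" and bBi: "\<And>n. \<beta>int n \<le> Bi"
    and \<theta>: "0 < \<theta>" "\<theta> < 1" "(B * m + Bi) * \<theta> \<le> \<delta> / 2"
  defines "n \<equiv> total_inf m x"
  shows "generator (\<lambda>y. 1 - \<theta> ^ min (total_inf m y) (Suc N)) x
    \<le> (if N < n then 0 else - (\<theta> ^ N * (1 - \<theta>) * \<delta> / 2))"
proof -
  let ?U = "\<Sum>u<m. up x u"
  have n: "1 \<le> n"
    using loc_state_eq_zero_iff[OF x(1)] x(2) unfolding n_def by auto
  have "?U * \<theta> \<le> (B * m + Bi) * real n * \<theta>"
    using sum_up_le[OF bB bBi, of x] \<theta> unfolding n_def by (intro mult_right_mono) auto
  also have "\<dots> \<le> \<delta> * n / 2"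
    using \<theta>(3) mult_right_mono[OF \<theta>(3), of "real n"] by (simp add: algebra_simps)
  finally have U: "?U * \<theta> \<le> \<delta> * n / 2" .
  have "generator (\<lambda>y. 1 - \<theta> ^ min (total_inf m y) (Suc N)) x
      = ?U * (\<theta> ^ min n (Suc N) - \<theta> ^ min (n + 1) (Suc N))
        + \<delta> * n * (\<theta> ^ min n (Suc N) - \<theta> ^ min (n - 1) (Suc N))"
    unfolding generator_total_fun[where \<phi> = "\<lambda>k. 1 - \<theta> ^ min k (Suc N)"] n_def by simp
  also have "\<dots> \<le> (if N < n then 0 else - (\<theta> ^ N * (1 - \<theta>) * \<delta> / 2))"
    using \<theta>(1,2) sum_nonneg[of "{..<m}" "up x", OF up_nonneg] U \<delta>_pos n
    by (rule truncated_geometric_drift)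
  finally show ?thesis .
qed

section \<open>Subcritical regime\<close>

lemma generator_ln_weighted_total_cases:
  fixes x :: "nat \<Rightarrow> nat"
  assumes graph: "simple_graph_on m E"
    and v: "\<And>i. i < m \<Longrightarrow> 1 \<le> v i" and vG: "\<And>i. i < m \<Longrightarrow> adj_op m E v i \<le> \<rho> * v i"
    and \<rho>: "0 \<le> \<rho>" and bB: "\<And>n. \<beta> n \<le> B" and bBi: "\<And>n. \<beta>int n \<le> Bi"
    and \<epsilon>: "0 < \<epsilon>" and sub: "\<And>n. N < n \<Longrightarrow> \<beta> n * \<rho> + \<beta>int n \<le> \<delta> - \<epsilon>"
    and x: "loc_state m x" "x \<noteq> (\<lambda>_. 0)"
  shows "generator (\<lambda>y. ln (1 + weighted_total m v y)) x
    \<le> (if N < total_inf m x then - \<epsilon> / 2 else B * \<rho> + Bi)"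
proof -
  define n where "n = total_inf m x"
  define t where "t = weighted_total m v x / (1 + weighted_total m v x)"
  define a where "a = \<beta> n * \<rho> + \<beta>int n - \<delta>"
  have "real n \<le> weighted_total m v x"
    using weighted_total_ge[of m 1 v x] v unfolding n_def by simp
  moreover have "1 \<le> n"
    using loc_state_eq_zero_iff[OF x(1)] x(2) unfolding n_def by auto
  ultimately have t: "1 / 2 \<le> t" "t \<le> 1"
    unfolding t_def by (auto simp: field_simps)
  have "generator (\<lambda>y. ln (1 + weighted_total m v y)) x \<le> a * t"
    unfolding a_def t_def n_def using v
    by (intro generator_ln_weighted_total_bound[OF graph _ vG]) (auto intro: order_trans[OF zero_le_one])
  moreover have "a * t \<le> - \<epsilon> / 2" if "N < n"
  proof -
    have "a * t \<le> - \<epsilon> * t"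
      using sub[OF that] t unfolding a_def by (intro mult_right_mono) auto
    also have "\<dots> \<le> - \<epsilon> / 2"
      using t \<epsilon> by simp
    finally show ?thesis .
  qed
  moreover have "a * t \<le> B * \<rho> + Bi"
  proof (cases "0 \<le> a")
    case True
    have "a \<le> B * \<rho> + Bi"
      unfolding a_def using bBi[of n] \<delta>_pos mult_right_mono[OF bB[of n] \<rho>] by linarith
    then show ?thesis
      using mult_left_mono[OF t(2) True] by simp
  next
    case False
    have "0 \<le> B" "0 \<le> Bi"
      using \<beta>_pos[of 0] bB[of 0] \<beta>int_pos[of 0] bBi[of 0] by linarith+
    then have "0 \<le> B * \<rho> + Bi"
      using \<rho> by simp
    then show ?thesis
      using mult_nonpos_nonneg[of a t] False t by linarith
  qed
  ultimately show ?thesis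
    unfolding n_def by auto
qed

text \<open>The logarithmic part has drift at most \<open>-\<epsilon>/2\<close> for large totals; the truncated geometric part
  supplies negative drift for the finitely many small totals, where the logarithmic part may grow.\<close>

lemma log_Lyapunov_drift:
  fixes x :: "nat \<Rightarrow> nat"
  assumes graph: "simple_graph_on m E"
    and v: "\<And>i. i < m \<Longrightarrow> 1 \<le> v i" and vG: "\<And>i. i < m \<Longrightarrow> adj_op m E v i \<le> \<rho> * v i"
    and \<rho>: "0 \<le> \<rho>" and bB: "\<And>n. \<beta> n \<le> B" and bBi: "\<And>n. \<beta>int n \<le> Bi"
    and \<epsilon>: "0 < \<epsilon>" and sub: "\<And>n. N < n \<Longrightarrow> \<beta> n * \<rho> + \<beta>int n \<le> \<delta> - \<epsilon>"
    and x: "loc_state m x" "x \<noteq> (\<lambda>_. 0)"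
  defines "\<theta> \<equiv> \<delta> / (2 * (B * m + Bi + \<delta>))"
  defines "K \<equiv> 2 * (1 + 2 / \<epsilon> * (B * \<rho> + Bi)) / (\<theta> ^ N * (1 - \<theta>) * \<delta>)"
  shows "1 + generator (\<lambda>y. 2 / \<epsilon> * ln (1 + weighted_total m v y)
      + K * (1 - \<theta> ^ min (total_inf m y) (Suc N))) x \<le> 0"
proof -
  let ?n = "total_inf m x"
  have B: "0 < B" "0 < Bi"
    using \<beta>_pos[of 0] bB[of 0] \<beta>int_pos[of 0] bBi[of 0] by linarith+
  have \<theta>: "0 < \<theta>" "\<theta> < 1" "(B * m + Bi) * \<theta> \<le> \<delta> / 2"
    unfolding \<theta>_def using drift_ratio_bounds[of "B * m + Bi" \<delta>] B \<delta>_pos by simp_all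
  have K: "K * (\<theta> ^ N * (1 - \<theta>) * \<delta> / 2) = 1 + 2 / \<epsilon> * (B * \<rho> + Bi)"
    unfolding K_def using \<theta> \<delta>_pos by simp
  have "0 \<le> K"
    unfolding K_def using \<theta> \<delta>_pos \<epsilon> B \<rho> by (intro divide_nonneg_pos) auto
  have "2 / \<epsilon> * generator (\<lambda>y. ln (1 + weighted_total m v y)) x
      + K * generator (\<lambda>y. 1 - \<theta> ^ min (total_inf m y) (Suc N)) x
    \<le> 2 / \<epsilon> * (if N < ?n then - \<epsilon> / 2 else B * \<rho> + Bi)
      + K * (if N < ?n then 0 else - (\<theta> ^ N * (1 - \<theta>) * \<delta> / 2))"
    using generator_ln_weighted_total_cases[OF graph v vG \<rho> bB bBi \<epsilon> sub x]
      generator_truncated_geometric[OF x bB bBi \<theta>] \<epsilon> \<open>0 \<le> K\<close>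
    by (intro add_mono mult_left_mono) auto
  also have "\<dots> = - 1"
  proof (cases "N < ?n")
    case True
    then show ?thesis
      using \<epsilon> by simp
  next
    case False
    have "K * - (\<theta> ^ N * (1 - \<theta>) * \<delta> / 2) = - (1 + 2 / \<epsilon> * (B * \<rho> + Bi))"
      by (simp only: mult_minus_right K)
    then show ?thesis
      using False by simp
  qed
  finally show ?thesis
    unfolding generator_add generator_cmult by linarith
qed

lemma expected_hitting_time_le_log:
  assumes graph: "simple_graph_on m E" and m: "0 < m"
    and v: "\<And>i. i < m \<Longrightarrow> 1 \<le> v i" and vG: "\<And>i. i < m \<Longrightarrow> adj_op m E v i \<le> \<rho> * v i"
    and \<rho>: "0 \<le> \<rho>" and bB: "\<And>n. \<beta> n \<le> B" and bBi: "\<And>n. \<beta>int n \<le> Bi"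
    and \<epsilon>: "0 < \<epsilon>" and sub: "\<And>n. N < n \<Longrightarrow> \<beta> n * \<rho> + \<beta>int n \<le> \<delta> - \<epsilon>"
  shows "\<exists>C>0. \<forall>X. loc_state m X \<longrightarrow> 2 \<le> total_inf m X \<longrightarrow>
    expected_hitting_time m E \<beta> \<beta>int \<delta> X \<le> ennreal (C * ln (total_inf m X))"
proof -
  define \<theta> where "\<theta> = \<delta> / (2 * (B * m + Bi + \<delta>))"
  define K where "K = 2 * (1 + 2 / \<epsilon> * (B * \<rho> + Bi)) / (\<theta> ^ N * (1 - \<theta>) * \<delta>)"
  define V where
    "V y = 2 / \<epsilon> * ln (1 + weighted_total m v y) + K * (1 - \<theta> ^ min (total_inf m y) (Suc N))" for y
  define W where "W = Max (v ` {..<m})"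
  define C where "C = 2 / \<epsilon> + (2 / \<epsilon> * ln (1 + W) + K) / ln 2"
  have B: "0 \<le> B" "0 \<le> Bi"
    using \<beta>_pos[of 0] bB[of 0] \<beta>int_pos[of 0] bBi[of 0] by linarith+
  have \<theta>: "0 < \<theta>" "\<theta> < 1"
    unfolding \<theta>_def using drift_ratio_bounds[of "B * m + Bi" \<delta>] B \<delta>_pos by simp_all
  have K: "0 \<le> K"
    unfolding K_def using \<theta> \<delta>_pos \<epsilon> B \<rho> by (intro divide_nonneg_pos) auto
  have v_nonneg: "\<And>i. i < m \<Longrightarrow> 0 \<le> v i"
    using v by (meson order_trans zero_le_one)
  have W: "v i \<le> W" if "i < m" for i
    unfolding W_def using that by (intro Max_ge) auto
  have W1: "1 \<le> W"
    using v[OF m] W[OF m] by (rule order_trans)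
  have V_nonneg: "0 \<le> V y" for y
    unfolding V_def using weighted_total_nonneg[where m = m and v = v and x = y, OF v_nonneg] \<epsilon> K \<theta>
    by (intro add_nonneg_nonneg mult_nonneg_nonneg) (auto simp: power_le_one)
  have hitting: "expected_hitting_time m E \<beta> \<beta>int \<delta> X \<le> ennreal (V X)" if "loc_state m X" for X
    using that V_nonneg
  proof (rule expected_hitting_time_le_Lyapunov)
    fix x assume "loc_state m x" "x \<noteq> (\<lambda>_. 0)"
    then show "1 + generator V x \<le> 0"
      unfolding V_def K_def \<theta>_def using log_Lyapunov_drift[where v = v, OF graph v vG \<rho> bB bBi \<epsilon> sub]
      by blast
  qed
  have V_le: "V X \<le> C * ln (total_inf m X)" if "2 \<le> total_inf m X" for X
  proof -
    have "ln (1 + weighted_total m v X) \<le> ln (1 + W * total_inf m X)"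
      using weighted_total_le[where m = m and v = v and x = X, OF W]
        weighted_total_nonneg[where m = m and v = v and x = X, OF v_nonneg]
      by simp
    moreover have "K * (1 - \<theta> ^ min (total_inf m X) (Suc N)) \<le> K"
      using K \<theta> by (simp add: mult_left_le)
    ultimately have "V X \<le> 2 / \<epsilon> * ln (1 + W * total_inf m X) + K"
      unfolding V_def using \<epsilon> by (intro add_mono mult_left_mono) auto
    also have "\<dots> \<le> C * ln (total_inf m X)"
      unfolding C_def using ln_affine_le[of "2 / \<epsilon>" K W "total_inf m X"] \<epsilon> K W1 that by simp
    finally show ?thesis .
  qed
  have "0 < C"
    unfolding C_def using \<epsilon> K W1 by (intro add_pos_nonneg divide_nonneg_pos add_nonneg_nonneg) auto
  then show ?thesis
    using hitting V_le by (blast intro: order_trans ennreal_leI)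
qed

lemma subcritical_hitting_time:
  assumes graph: "simple_graph_on m E"
    and bdd: "bounded (range \<beta>)" "bounded (range \<beta>int)" and lim: "\<beta> \<longlonglongrightarrow> b" "\<beta>int \<longlonglongrightarrow> b'"
    and sub: "b * spectral_radius (adj_mat m E) + b' < \<delta>"
  shows "\<exists>C>0. \<forall>X n. loc_state m X \<longrightarrow> total_inf m X = n \<longrightarrow> 2 \<le> n \<longrightarrow>
    expected_hitting_time m E \<beta> \<beta>int \<delta> X \<le> ennreal (C * ln (real n))"
proof (cases "m = 0")
  case True
  then show ?thesis
    by (intro exI[of _ 1]) (simp add: total_inf_def)
next
  case False
  let ?sr = "spectral_radius (adj_mat m E)"
  have "0 \<le> b"
    using lim(1) by (rule LIMSEQ_le_const) (use \<beta>_pos less_imp_le in blast)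
  obtain \<rho> where "?sr < \<rho>" "b * \<rho> + b' < \<delta>"
    using affine_less_above[OF \<open>0 \<le> b\<close> sub] by blast
  have "0 \<le> \<rho>"
    using spectral_radius_adj_mat_nonneg[of m E] False \<open>?sr < \<rho>\<close> by simp
  moreover obtain \<epsilon> N where "0 < \<epsilon>" "\<And>n. N < n \<Longrightarrow> \<beta> n * \<rho> + \<beta>int n \<le> \<delta> - \<epsilon>"
    using eventually_margin_below[OF lim \<open>b * \<rho> + b' < \<delta>\<close>] by blast
  moreover obtain v where "\<And>i. i < m \<Longrightarrow> 1 \<le> v i" "\<And>i. i < m \<Longrightarrow> adj_op m E v i \<le> \<rho> * v i"
    using adj_supereigvec_exists[of m E \<rho>] False \<open>?sr < \<rho>\<close> by auto
  moreover obtain B Bi where "\<And>n. \<beta> n \<le> B" "\<And>n. \<beta>int n \<le> Bi"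
    using bounded_range_le[OF bdd(1)] bounded_range_le[OF bdd(2)] by blast
  ultimately show ?thesis
    using expected_hitting_time_le_log[OF graph, of v \<rho> B Bi \<epsilon> N] False by auto
qed

section \<open>Supercritical regime\<close>

lemma sum_sq_rates_le:
  assumes v: "\<And>i. i < m \<Longrightarrow> 0 \<le> v i" "\<And>i. i < m \<Longrightarrow> v i \<le> W"
    and bB: "\<And>n. \<beta> n \<le> B" and bBi: "\<And>n. \<beta>int n \<le> Bi"
  shows "(\<Sum>u<m. (v u)\<^sup>2 * (up x u + down x u)) \<le> W\<^sup>2 * ((B * m + Bi + \<delta>) * real (total_inf m x))"
proof -
  have "(\<Sum>u<m. (v u)\<^sup>2 * (up x u + down x u)) \<le> (\<Sum>u<m. W\<^sup>2 * (up x u + down x u))"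
    using v up_nonneg down_nonneg
    by (intro sum_mono mult_right_mono power_mono add_nonneg_nonneg) auto
  also have "\<dots> = W\<^sup>2 * q x"
    unfolding total_rate_def by (simp add: sum_distrib_left[symmetric] sum.distrib)
  also have "\<dots> \<le> W\<^sup>2 * ((B * m + Bi + \<delta>) * real (total_inf m x))"
    using total_rate_le[OF bB bBi, of x] by (intro mult_left_mono) auto
  finally show ?thesis .
qed

lemma generator_weighted_total_supercritical:
  fixes x :: "nat \<Rightarrow> nat"
  assumes graph: "simple_graph_on m E"
    and v: "\<And>i. i < m \<Longrightarrow> vmin \<le> v i" "\<And>i. i < m \<Longrightarrow> v i \<le> W" and vmin: "0 < vmin"
    and vG: "\<And>i. i < m \<Longrightarrow> l * v i \<le> adj_op m E v i"
    and \<epsilon>: "0 < \<epsilon>" and sup: "\<And>n. N < n \<Longrightarrow> \<delta> + \<epsilon> \<le> \<beta> n * l + \<beta>int n"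
    and x: "loc_state m x" "x \<noteq> (\<lambda>_. 0)" and large: "W * N < weighted_total m v x"
  shows "\<epsilon> * (vmin * total_inf m x) \<le> generator (weighted_total m v) x"
proof -
  define n where "n = total_inf m x"
  define w where "w = weighted_total m v x"
  have wn: "vmin * n \<le> w" "w \<le> W * n"
    unfolding n_def w_def
    using weighted_total_ge[where m = m and v = v and x = x, OF v(1)]
      weighted_total_le[where m = m and v = v and x = x, OF v(2)] by auto
  have "0 < n"
    using loc_state_eq_zero_iff[OF x(1)] x(2) unfolding n_def by auto
  moreover have "vmin * n \<le> W * n"
    using wn by linarith
  ultimately have "vmin \<le> W"
    by (intro mult_right_le_imp_le[of vmin "real n" W]) auto
  moreover have "W * N < W * n"
    using large wn unfolding w_def by linarith
  ultimately have "N < n"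
    using vmin by (simp add: mult_less_cancel_left_pos)
  have "0 \<le> vmin * n"
    using vmin by simp
  then have "0 \<le> w"
    using wn by linarith
  have "\<epsilon> * (vmin * n) \<le> \<epsilon> * w"
    using wn \<epsilon> by (intro mult_left_mono) auto
  also have "\<dots> \<le> (\<beta> n * l + \<beta>int n - \<delta>) * w"
    using sup[OF \<open>N < n\<close>] \<open>0 \<le> w\<close> by (intro mult_right_mono) auto
  also have "\<dots> \<le> generator (weighted_total m v) x"
    unfolding n_def w_def by (rule generator_weighted_total_ge[OF graph vG])
  finally show ?thesis
    unfolding n_def .
qed

text \<open>Where \<open>1 - exp (a W N) exp (-a w)\<close> is positive, \<open>w > W N\<close> forces the total above \<open>N\<close>, so the
  weighted total has drift at least \<open>\<epsilon> w\<close>; for small \<open>a\<close> this dominates the quadratic error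
  of the exponential.\<close>

lemma exp_Lyapunov_drift:
  fixes x :: "nat \<Rightarrow> nat"
  assumes graph: "simple_graph_on m E"
    and v: "\<And>i. i < m \<Longrightarrow> vmin \<le> v i" "\<And>i. i < m \<Longrightarrow> v i \<le> W" and vmin: "0 < vmin"
    and vG: "\<And>i. i < m \<Longrightarrow> l * v i \<le> adj_op m E v i"
    and bB: "\<And>n. \<beta> n \<le> B" and bBi: "\<And>n. \<beta>int n \<le> Bi"
    and \<epsilon>: "0 < \<epsilon>" and sup: "\<And>n. N < n \<Longrightarrow> \<delta> + \<epsilon> \<le> \<beta> n * l + \<beta>int n"
    and a: "0 < a" "a * W \<le> 1" "a * (W\<^sup>2 * (B * m + Bi + \<delta>)) \<le> \<epsilon> * vmin"
    and x: "loc_state m x" "x \<noteq> (\<lambda>_. 0)"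
    and pos: "0 < 1 - exp (a * W * N) * exp (- a * weighted_total m v x)"
  shows "0 \<le> generator (\<lambda>y. 1 - exp (a * W * N) * exp (- a * weighted_total m v y)) x"
proof -
  let ?n = "total_inf m x"
  let ?S = "\<Sum>u<m. (v u)\<^sup>2 * (up x u + down x u)"
  have v_nonneg: "\<And>i. i < m \<Longrightarrow> 0 \<le> v i"
    using v vmin by (meson less_le_trans less_imp_le)
  have "W * N < weighted_total m v x"
    using pos a(1) by (simp add: exp_add[symmetric] algebra_simps)
  then have "\<epsilon> * (vmin * ?n) \<le> generator (weighted_total m v) x"
    using generator_weighted_total_supercritical[where v = v, OF graph v vmin vG \<epsilon> sup x] by blast
  moreover have "a\<^sup>2 * ?S \<le> a * (\<epsilon> * (vmin * ?n))"
  proof -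
    have "a\<^sup>2 * ?S \<le> a\<^sup>2 * (W\<^sup>2 * ((B * m + Bi + \<delta>) * ?n))"
      using sum_sq_rates_le[where v = v and x = x, OF v_nonneg v(2) bB bBi]
      by (intro mult_left_mono) auto
    also have "\<dots> = a * ?n * (a * (W\<^sup>2 * (B * m + Bi + \<delta>)))"
      by (simp add: power2_eq_square algebra_simps)
    also have "\<dots> \<le> a * ?n * (\<epsilon> * vmin)"
      using a by (intro mult_left_mono) auto
    finally show ?thesis
      by (simp add: algebra_simps)
  qed
  ultimately have "0 \<le> a * generator (weighted_total m v) x - a\<^sup>2 * ?S"
    using mult_left_mono[of "\<epsilon> * (vmin * ?n)" "generator (weighted_total m v) x" a] a(1) by linarith
  then have "0 \<le> exp (- a * weighted_total m v x) * (a * generator (weighted_total m v) x - a\<^sup>2 * ?S)"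
    by simp
  also have "\<dots> \<le> generator (\<lambda>y. - exp (- a * weighted_total m v y)) x"
    using v_nonneg a order_trans[OF mult_left_mono[OF v(2)] a(2)]
    by (intro generator_exp_weighted_total_ge) auto
  finally have "0 \<le> exp (a * W * N) * generator (\<lambda>y. - exp (- a * weighted_total m v y)) x"
    by simp
  also have "\<dots> = generator (\<lambda>y. 1 + exp (a * W * N) * - exp (- a * weighted_total m v y)) x"
    unfolding generator_add generator_const generator_cmult by simp
  finally show ?thesis
    by simp
qed

lemma reachable_large_weighted_total:
  assumes X: "loc_state m X" and u0: "u0 < m" "0 < X u0"
    and v: "\<And>i. i < m \<Longrightarrow> vmin \<le> v i" and vmin: "0 < vmin"
  shows "\<exists>k y. 0 < jump_dist m E \<beta> \<beta>int \<delta> X k y \<and> c < weighted_total m v y"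
proof -
  obtain k :: nat where k: "c / vmin < k"
    using reals_Archimedean2 by blast
  define y where "y = X(u0 := X u0 + k)"
  have "c < vmin * k"
    using k vmin by (simp add: field_simps)
  also have "\<dots> \<le> vmin * total_inf m y"
    unfolding y_def using total_inf_upd[OF u0(1), of X "X u0 + k"] vmin
    by (intro mult_left_mono) auto
  also have "\<dots> \<le> weighted_total m v y"
    by (rule weighted_total_ge[where m = m and v = v, OF v])
  finally show ?thesis
    using jump_dist_incr_pos[OF X u0, of k] unfolding y_def by blast
qed

lemma expected_hitting_time_infinite_of_subeigvec:
  assumes graph: "simple_graph_on m E"
    and v: "\<And>i. i < m \<Longrightarrow> vmin \<le> v i" "\<And>i. i < m \<Longrightarrow> v i \<le> W" and vmin: "0 < vmin"
    and vG: "\<And>i. i < m \<Longrightarrow> l * v i \<le> adj_op m E v i"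
    and bB: "\<And>n. \<beta> n \<le> B" and bBi: "\<And>n. \<beta>int n \<le> Bi"
    and \<epsilon>: "0 < \<epsilon>" and margin: "\<And>n. N < n \<Longrightarrow> \<delta> + \<epsilon> \<le> \<beta> n * l + \<beta>int n"
    and X: "loc_state m X" and u0: "u0 < m" "0 < X u0"
  shows "expected_hitting_time m E \<beta> \<beta>int \<delta> X = \<infinity>"
proof -
  define R where "R = B * m + Bi + \<delta>"
  define a where "a = min (1 / W) (\<epsilon> * vmin / (W\<^sup>2 * R))"
  define g where "g y = 1 - exp (a * W * N) * exp (- a * weighted_total m v y)" for y
  have W: "0 < W"
    using v[OF u0(1)] vmin by linarith
  have "0 \<le> B" "0 \<le> Bi"
    using \<beta>_pos[of 0] bB[of 0] \<beta>int_pos[of 0] bBi[of 0] by linarith+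
  then have R: "0 < R"
    unfolding R_def using \<delta>_pos mult_nonneg_nonneg[of B "real m"] by linarith
  have a: "0 < a" "a * W \<le> 1" "a * (W\<^sup>2 * (B * m + Bi + \<delta>)) \<le> \<epsilon> * vmin"
    unfolding a_def R_def[symmetric] using W R \<epsilon> vmin
    by (auto simp: min_def field_simps not_le intro: less_imp_le)
  obtain k y where reach: "0 < jump_dist m E \<beta> \<beta>int \<delta> X k y" and "W * N < weighted_total m v y"
    using reachable_large_weighted_total[where v = v, OF X u0 v(1) vmin] by blast
  then have "0 < g y"
    unfolding g_def using a(1) by (simp add: exp_add[symmetric] algebra_simps)
  show ?thesis
  proof (rule expected_hitting_time_infinite[OF X R])
    show "q x \<le> R * real (total_inf m x)" for x
      unfolding R_def by (rule total_rate_le[OF bB bBi])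
    show "g x \<le> 1" for x
      unfolding g_def by simp
    show "g (\<lambda>_. 0) \<le> 0"
      unfolding g_def weighted_total_def using a(1) W by simp
    show "ennreal (g x) \<le> next_expectation (\<lambda>y. ennreal (g y)) x" if "loc_state m x" for x
      using that
    proof (rule next_expectation_ge)
      assume "x \<noteq> (\<lambda>_. 0)" "0 < g x"
      then show "0 \<le> generator g x"
        unfolding g_def
        by (intro exp_Lyapunov_drift[where v = v, OF graph v vmin vG bB bBi \<epsilon> margin a that])
    qed
  qed (fact reach \<open>0 < g y\<close>)+
qed

lemma supercritical_hitting_time:
  assumes graph: "simple_graph_on m E" and conn: "connected_on m E"
    and bdd: "bounded (range \<beta>)" "bounded (range \<beta>int)" and lim: "\<beta> \<longlonglongrightarrow> b" "\<beta>int \<longlonglongrightarrow> b'"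
    and sup: "\<delta> < b * spectral_radius (adj_mat m E) + b'"
    and X: "loc_state m X" "X \<noteq> (\<lambda>_. 0)"
  shows "expected_hitting_time m E \<beta> \<beta>int \<delta> X = \<infinity>"
proof -
  obtain u0 where u0: "u0 < m" "0 < X u0"
    using X unfolding loc_state_def by (metis not_le neq0_conv)
  then obtain v where v_pos: "\<And>i. i < m \<Longrightarrow> 0 < v i"
    and vG: "\<And>i. i < m \<Longrightarrow> spectral_radius (adj_mat m E) * v i \<le> adj_op m E v i"
    using adj_subeigvec_imp_pos[OF graph conn] adj_subeigvec_exists[of m E]
    by (metis gr_zeroI not_less0)
  define vmin where "vmin = Min (v ` {..<m})"
  define W where "W = Max (v ` {..<m})"
  have v: "vmin \<le> v i" "v i \<le> W" if "i < m" for i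
    unfolding vmin_def W_def using that by (auto intro: Min_le Max_ge)
  have "vmin \<in> v ` {..<m}"
    unfolding vmin_def using u0 by (intro Min_in) auto
  then have vmin: "0 < vmin"
    using v_pos by auto
  obtain \<epsilon> N where "0 < \<epsilon>" "\<And>n. N < n \<Longrightarrow> \<delta> + \<epsilon> \<le> \<beta> n * spectral_radius (adj_mat m E) + \<beta>int n"
    using eventually_margin_above[OF lim sup] by blast
  moreover obtain B Bi where "\<And>n. \<beta> n \<le> B" "\<And>n. \<beta>int n \<le> Bi"
    using bounded_range_le[OF bdd(1)] bounded_range_le[OF bdd(2)] by blast
  ultimately show ?thesis
    using expected_hitting_time_infinite_of_subeigvec[where v = v, OF graph _ _ vmin vG] v X(1) u0
    by blast
qed

end

theorem theorem1:
  fixes m :: nat and E :: "nat \<Rightarrow> nat \<Rightarrow> bool"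
    and \<beta> \<beta>int :: "nat \<Rightarrow> real" and \<beta>inf \<beta>intinf \<delta> :: real
  assumes graph: "simple_graph_on m E"
    and conn: "connected_on m E"
    and \<beta>_pos: "\<And>n. \<beta> n > 0" and \<beta>int_pos: "\<And>n. \<beta>int n > 0"
    and \<beta>_bdd: "bounded (range \<beta>)" and \<beta>int_bdd: "bounded (range \<beta>int)"
    and \<beta>_lim: "\<beta> \<longlonglongrightarrow> \<beta>inf" and \<beta>int_lim: "\<beta>int \<longlonglongrightarrow> \<beta>intinf"
    and \<delta>_pos: "\<delta> > 0"
  shows "(\<beta>inf * spectral_radius (adj_mat m E) + \<beta>intinf < \<delta> \<longrightarrow>
            (\<exists>C::real. C > 0 \<and>
               (\<forall>X n. loc_state m X \<longrightarrow> total_inf m X = n \<longrightarrow> n \<ge> 2 \<longrightarrow>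
                  expected_hitting_time m E \<beta> \<beta>int \<delta> X \<le> ennreal (C * ln (real n)))))
       \<and> (\<beta>inf * spectral_radius (adj_mat m E) + \<beta>intinf > \<delta> \<longrightarrow>
            (\<forall>X. loc_state m X \<longrightarrow> X \<noteq> (\<lambda>_. 0) \<longrightarrow>
                  expected_hitting_time m E \<beta> \<beta>int \<delta> X = \<infinity>))"
proof -
  interpret epidemic m E \<beta> \<beta>int \<delta>
    using \<beta>_pos \<beta>int_pos \<delta>_pos by unfold_locales
  show ?thesis
    using subcritical_hitting_time[OF graph \<beta>_bdd \<beta>int_bdd \<beta>_lim \<beta>int_lim]
      supercritical_hitting_time[OF graph conn \<beta>_bdd \<beta>int_bdd \<beta>_lim \<beta>int_lim]
    by blast
qed

end
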